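(* For $\lambda=(\sigma,b,r)\in(0,\infty)^3$ let $\mathscr A_\lambda\subseteq\mathbb R^3$ be the global attractor of the semigroup generated by the Lorenz system $x'=-\sigma x+\sigma y$, $y'=rx-y-xz$, $z'=-bz+xy$. There is a residual and dense subset $\Lambda_*\subseteq(0,\infty)^3$ such that the map $(0,\infty)^3\to CB(\mathbb R^3)$, $\lambda\mapsto\mathscr A_\lambda$, is continuous at every $\lambda\in\Lambda_*$.
   Context: For each $\lambda\in(0,\infty)^3$ the Lorenz system generates a semigroup $S_\lambda(t)$ on $\mathbb R^3$ possessing a global attractor, i.e. a compact invariant set attracting every bounded set. $CB(\mathbb R^3)$ is the space of nonempty closed bounded subsets of $\mathbb R^3$ with the Hausdorff metric $\Delta(A,C)=\max(\sup_{a\in A}\inf_{c\in C}|a-c|,\sup_{c\in C}\inf_{a\in A}|a-c|)$. A set is residual if its complement is a countable union of nowhere dense sets. *)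

theory Defs
  imports "HOL-Analysis.Analysis"
begin

type_synonym R3 = "real \<times> real \<times> real"

definition lorenz :: "R3 \<Rightarrow> R3 \<Rightarrow> R3" where
  "lorenz lam p = (case lam of (\<sigma>, b, r) \<Rightarrow> case p of (x, y, z) \<Rightarrow>
     (- \<sigma> * x + \<sigma> * y, r * x - y - x * z, - b * z + x * y))"

definition lorenz_solution :: "R3 \<Rightarrow> (real \<Rightarrow> R3) \<Rightarrow> bool" where
  "lorenz_solution lam u \<longleftrightarrow>
     (\<forall>s\<ge>0. (u has_vector_derivative lorenz lam (u s)) (at s within {0..}))"

definition lorenz_semigroup :: "R3 \<Rightarrow> real \<Rightarrow> R3 \<Rightarrow> R3" where
  "lorenz_semigroup lam t x = (THE y. \<exists>u. lorenz_solution lam u \<and> u 0 = x \<and> u t = y)"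

definition is_global_attractor :: "(real \<Rightarrow> R3 \<Rightarrow> R3) \<Rightarrow> R3 set \<Rightarrow> bool" where
  "is_global_attractor S A \<longleftrightarrow>
     A \<noteq> {} \<and> compact A \<and> (\<forall>t\<ge>0. S t ` A = A) \<and>
     (\<forall>B. bounded B \<longrightarrow>
        (\<forall>e>0. \<exists>T. \<forall>t\<ge>T. \<forall>x\<in>B. infdist (S t x) A < e))"

definition lorenz_attractor :: "R3 \<Rightarrow> R3 set" where
  "lorenz_attractor lam = (THE A. is_global_attractor (lorenz_semigroup lam) A)"

definition hausdorff_dist :: "'a::metric_space set \<Rightarrow> 'a set \<Rightarrow> real" where
  "hausdorff_dist A C = max (SUP a\<in>A. infdist a C) (SUP c\<in>C. infdist c A)"

definition pos_params :: "R3 set" where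
  "pos_params = {(\<sigma>, b, r). \<sigma> > 0 \<and> b > 0 \<and> r > 0}"

definition nowhere_dense :: "'a::topological_space set \<Rightarrow> bool" where
  "nowhere_dense N \<longleftrightarrow> interior (closure N) = {}"

definition residual_in :: "'a::topological_space set \<Rightarrow> 'a set \<Rightarrow> bool" where
  "residual_in L X \<longleftrightarrow> L \<subseteq> X \<and>
     (\<exists>N :: nat \<Rightarrow> 'a set. (\<forall>n. nowhere_dense (N n)) \<and> X - L \<subseteq> (\<Union>n. N n))"

definition dense_in :: "'a::topological_space set \<Rightarrow> 'a set \<Rightarrow> bool" where
  "dense_in L X \<longleftrightarrow> L \<subseteq> X \<and> X \<subseteq> closure L"

end

(*
  The Lorenz system is dissipative: with the centre c = (0, 0, sigma + r), every solution satisfies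
  d/dt |u - c|^2 <= - a |u - c|^2 + B.  Hence solutions exist globally (Picard iteration for the
  field truncated outside a trapping ball), are unique by Gronwall's inequality, and enter an
  absorbing ball, whose omega-limit set is the global attractor.  The absorbing balls are locally
  uniform in the parameter and, up to a fixed time, trajectories depend Lipschitz continuously on
  it; together with the attraction property this makes lam |-> A lam upper semicontinuous.
  Finally, an upper semicontinuous family of nonempty compact sets over an open subset of R^n is
  continuous in the Hausdorff metric off the boundaries of the open sets
  {lam. infdist q (A lam) > rho}, with q in a countable dense set and rho rational.  These
  boundaries are nowhere dense, so by Baire's theorem the points of continuity form a dense
  residual set.
*)

theory Submission
  imports Defs
begin

section \<open>Global solutions of bounded Lipschitz fields\<close>

lemma at_within_atLeastAtMost_eq:
  assumes "0 \<le> s" "s < b"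
  shows "at s within {0..b} = at (s::real) within {0..}"
  by (rule at_within_nhd[of _ "{..<b}"]) (use assms in auto)

lemma integral_has_vector_derivative_atLeast:
  fixes h :: "real \<Rightarrow> 'a::banach"
  assumes "continuous_on {0..b} h" "0 \<le> s" "s < b"
  shows "((\<lambda>t. integral {0..t} h) has_vector_derivative h s) (at s within {0..})"
  using integral_has_vector_derivative[of 0 b h s] assms
  by (simp add: at_within_atLeastAtMost_eq)

lemma integral_monomial:
  assumes "0 \<le> t"
  shows "integral {0..t} (\<lambda>s. c * s ^ k) = c * t ^ Suc k / Suc k"
proof -
  have "((\<lambda>s. c * s ^ k) has_integral c * t ^ Suc k / Suc k - c * 0 ^ Suc k / Suc k) {0..t}"
  proof (rule fundamental_theorem_of_calculus[OF assms])
    fix x assume "x \<in> {0..t}"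
    show "((\<lambda>s. c * s ^ Suc k / real (Suc k)) has_vector_derivative c * x ^ k) (at x within {0..t})"
      unfolding has_real_derivative_iff_has_vector_derivative[symmetric]
      by (rule derivative_eq_intros refl | simp)+
  qed
  from integral_unique[OF this] show ?thesis by simp
qed

locale bounded_lipschitz_field =
  fixes g :: "'a::banach \<Rightarrow> 'a" and L M :: real
  assumes lipschitz: "norm (g p - g q) \<le> L * norm (p - q)"
    and bounded: "norm (g p) \<le> M"
    and L_nonneg: "L \<ge> 0"
begin

lemma M_nonneg: "M \<ge> 0"
  using bounded norm_ge_zero order_trans by blast

lemma lipschitz_on_field: "L-lipschitz_on UNIV g"
  using lipschitz by (auto intro: lipschitz_onI simp: dist_norm L_nonneg)

lemma continuous_on_compose_field: "continuous_on S u \<Longrightarrow> continuous_on S (\<lambda>s. g (u s))"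
  using continuous_on_compose2[OF lipschitz_on_continuous_on[OF lipschitz_on_field]] by blast

definition picard :: "'a \<Rightarrow> nat \<Rightarrow> real \<Rightarrow> 'a" where
  "picard x0 n = ((\<lambda>u t. x0 + integral {0..t} (\<lambda>s. g (u s))) ^^ n) (\<lambda>_. x0)"

lemma picard_0 [simp]: "picard x0 0 t = x0"
  by (simp add: picard_def)

lemma picard_Suc: "picard x0 (Suc n) t = x0 + integral {0..t} (\<lambda>s. g (picard x0 n s))"
  by (simp add: picard_def)

lemma continuous_on_picard: "continuous_on {0..} (picard x0 n)"
proof (induction n)
  case 0
  then show ?case by simp
next
  case (Suc n)
  have "((\<lambda>t. integral {0..t} (\<lambda>s. g (picard x0 n s))) has_vector_derivative g (picard x0 n s))
          (at s within {0..})" if "s \<in> {0..}" for s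
    using that continuous_on_compose_field[OF continuous_on_subset[OF Suc]]
    by (intro integral_has_vector_derivative_atLeast[of "s+1"]) auto
  then have "continuous_on {0..} (\<lambda>t. integral {0..t} (\<lambda>s. g (picard x0 n s)))"
    by (rule continuous_on_vector_derivative)
  then show ?case
    by (simp add: picard_Suc[abs_def] continuous_on_add[OF continuous_on_const])
qed

lemma picard_integrable: "0 \<le> t \<Longrightarrow> (\<lambda>s. g (picard x0 n s)) integrable_on {0..t}"
  by (intro integrable_continuous_real continuous_on_compose_field
      continuous_on_subset[OF continuous_on_picard]) auto

lemma picard_step_bound:
  "0 \<le> t \<Longrightarrow> norm (picard x0 (Suc n) t - picard x0 n t) \<le> M * L ^ n * t ^ Suc n / fact (Suc n)"
proof (induction n arbitrary: t)
  case 0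
  have "norm (integral {0..t} (\<lambda>s. g x0)) \<le> integral {0..t} (\<lambda>s. M)"
    by (rule integral_norm_bound_integral) (auto simp: bounded)
  then show ?case using 0 by (simp add: picard_Suc algebra_simps)
next
  case (Suc n)
  let ?c = "L * (M * L ^ n / fact (Suc n))"
  have "picard x0 (Suc (Suc n)) t - picard x0 (Suc n) t =
          integral {0..t} (\<lambda>s. g (picard x0 (Suc n) s) - g (picard x0 n s))"
    unfolding picard_Suc[of x0 "Suc n" t] picard_Suc[of x0 n t]
    using integral_diff[OF picard_integrable[OF Suc.prems] picard_integrable[OF Suc.prems]] by simp
  also have "norm \<dots> \<le> integral {0..t} (\<lambda>s. ?c * s ^ Suc n)"
  proof (rule integral_norm_bound_integral)
    show "(\<lambda>s. g (picard x0 (Suc n) s) - g (picard x0 n s)) integrable_on {0..t}"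
      by (intro integrable_diff picard_integrable Suc.prems)
    show "(\<lambda>s. ?c * s ^ Suc n) integrable_on {0..t}"
      by (intro integrable_continuous_real continuous_intros)
    fix s assume s: "s \<in> {0..t}"
    have "norm (g (picard x0 (Suc n) s) - g (picard x0 n s)) \<le> L * norm (picard x0 (Suc n) s - picard x0 n s)"
      by (rule lipschitz)
    also have "\<dots> \<le> L * (M * L ^ n * s ^ Suc n / fact (Suc n))"
      using Suc.IH[of s] s L_nonneg by (intro mult_left_mono) auto
    finally show "norm (g (picard x0 (Suc n) s) - g (picard x0 n s)) \<le> ?c * s ^ Suc n"
      by (simp add: field_simps)
  qed
  also have "\<dots> = ?c * t ^ Suc (Suc n) / Suc (Suc n)"
    by (rule integral_monomial[OF Suc.prems])
  also have "\<dots> = M * L ^ Suc n * t ^ Suc (Suc n) / fact (Suc (Suc n))"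
    by (simp add: field_simps)
  finally show ?case .
qed

definition picard_limit :: "'a \<Rightarrow> real \<Rightarrow> 'a" where
  "picard_limit x0 t = x0 + (\<Sum>k. picard x0 (Suc k) t - picard x0 k t)"

lemma picard_telescope: "picard x0 n t = x0 + (\<Sum>k<n. picard x0 (Suc k) t - picard x0 k t)"
  by (induction n) auto

lemma picard_uniform_limit:
  assumes "0 \<le> T"
  shows "uniform_limit {0..T} (picard x0) (picard_limit x0) sequentially"
proof -
  have bound: "norm (picard x0 (Suc n) t - picard x0 n t) \<le> M * T * ((L*T) ^ n / fact n)"
    if t: "t \<in> {0..T}" for n t
  proof -
    have "norm (picard x0 (Suc n) t - picard x0 n t) \<le> M * L ^ n * t ^ Suc n / fact (Suc n)"
      using picard_step_bound t by auto
    also have "\<dots> \<le> M * L ^ n * T ^ Suc n / fact (Suc n)"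
      using t M_nonneg L_nonneg by (intro divide_right_mono mult_left_mono power_mono) auto
    also have "\<dots> \<le> M * L ^ n * T ^ Suc n / fact n"
      using M_nonneg L_nonneg assms by (intro divide_left_mono mult_nonneg_nonneg) (auto intro!: fact_mono)
    also have "\<dots> = M * T * ((L*T) ^ n / fact n)"
      by (simp add: power_mult_distrib)
    finally show ?thesis .
  qed
  have summable: "summable (\<lambda>n. M * T * ((L*T) ^ n / fact n))"
    using summable_exp[of "L*T"] by (intro summable_mult) (simp add: field_simps)
  have "uniform_limit {0..T} (\<lambda>n t. \<Sum>k<n. picard x0 (Suc k) t - picard x0 k t)
              (\<lambda>t. \<Sum>k. picard x0 (Suc k) t - picard x0 k t) sequentially"
    by (rule Weierstrass_m_test[where f="\<lambda>k t. picard x0 (Suc k) t - picard x0 k t", OF bound summable])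
  then have "uniform_limit {0..T} (\<lambda>n t. x0 + (\<Sum>k<n. picard x0 (Suc k) t - picard x0 k t))
              (picard_limit x0) sequentially"
    by (simp add: uniform_limit_iff dist_add_cancel picard_limit_def)
  then show ?thesis
    using uniform_limit_cong'[of "{0..T}" "picard x0" "\<lambda>n t. x0 + (\<Sum>k<n. picard x0 (Suc k) t - picard x0 k t)"]
      picard_telescope by blast
qed

lemma continuous_on_picard_limit:
  assumes "0 \<le> T"
  shows "continuous_on {0..T} (picard_limit x0)"
proof (rule uniform_limit_theorem[OF always_eventually picard_uniform_limit[OF assms]])
  show "\<forall>n. continuous_on {0..T} (picard x0 n)"
    by (auto intro: continuous_on_subset[OF continuous_on_picard])
qed simp

lemma picard_limit_integral_eq:
  assumes t: "0 \<le> t"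
  shows "picard_limit x0 t = x0 + integral {0..t} (\<lambda>s. g (picard_limit x0 s))"
proof -
  have uniform: "uniform_limit {0..t} (\<lambda>n s. g (picard x0 n s)) (\<lambda>s. g (picard_limit x0 s)) sequentially"
    by (rule uniform_limit_compose_uniformly_continuous_on[OF picard_uniform_limit[OF t]
          lipschitz_on_uniformly_continuous[OF lipschitz_on_field]]) auto
  have "continuous_on {0..t} (\<lambda>s. g (picard x0 n s))" for n
    by (simp add: continuous_on_compose_field continuous_on_subset[OF continuous_on_picard])
  then obtain I J where I: "\<And>n. ((\<lambda>s. g (picard x0 n s)) has_integral I n) {0..t}"
    and J: "((\<lambda>s. g (picard_limit x0 s)) has_integral J) {0..t}" and "I \<longlonglongrightarrow> J"
    by (rule uniform_limit_integral[OF uniform]) auto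
  have "(\<lambda>n. picard x0 (Suc n) t) \<longlonglongrightarrow> x0 + J"
    using tendsto_add[OF tendsto_const \<open>I \<longlonglongrightarrow> J\<close>, of x0] I
    by (simp add: picard_Suc integral_unique[OF I])
  moreover have "(\<lambda>n. picard x0 (Suc n) t) \<longlonglongrightarrow> picard_limit x0 t"
    using tendsto_uniform_limitI[OF picard_uniform_limit[OF t], of t] t LIMSEQ_Suc by auto
  ultimately show ?thesis
    using J by (simp add: LIMSEQ_unique integral_unique)
qed

theorem global_solution:
  "\<exists>u. u 0 = x0 \<and> (\<forall>s\<ge>0. (u has_vector_derivative g (u s)) (at s within {0..}))"
proof (intro exI conjI allI impI)
  show "picard_limit x0 0 = x0"
    using picard_limit_integral_eq[of 0] by simp
  fix s :: real assume s: "0 \<le> s"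
  have "((\<lambda>t. x0 + integral {0..t} (\<lambda>s. g (picard_limit x0 s))) has_vector_derivative g (picard_limit x0 s))
          (at s within {0..})"
    using integral_has_vector_derivative_atLeast[OF _ s, of "s+1"] s
      continuous_on_compose_field[OF continuous_on_picard_limit[of "s+1"]]
    by (auto intro!: derivative_eq_intros)
  then show "(picard_limit x0 has_vector_derivative g (picard_limit x0 s)) (at s within {0..})"
    by (rule has_vector_derivative_transform[rotated 2]) (auto simp: picard_limit_integral_eq s)
qed

end

section \<open>Differential inequalities\<close>

lemma has_real_derivative_norm_diff_power2:
  fixes u :: "real \<Rightarrow> 'a::real_inner"
  assumes "(u has_vector_derivative u') (at t within S)"
  shows "((\<lambda>t. (norm (u t - c))\<^sup>2) has_real_derivative 2 * ((u t - c) \<bullet> u')) (at t within S)"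
proof -
  have d: "((\<lambda>t. u t - c) has_derivative (\<lambda>h. h *\<^sub>R u')) (at t within S)"
    using assms unfolding has_vector_derivative_def by (intro derivative_eq_intros) auto
  have "((\<lambda>t. (u t - c) \<bullet> (u t - c)) has_derivative (\<lambda>h. (2 * ((u t - c) \<bullet> u')) * h)) (at t within S)"
    by (rule has_derivative_eq_rhs[OF has_derivative_inner[OF d d]])
       (auto simp: inner_commute algebra_simps)
  then show ?thesis
    by (simp add: power2_norm_eq_inner has_field_derivative_def)
qed

lemma at_within_atLeast_0: "(x::real) > 0 \<Longrightarrow> at x within {0..} = at x"
  by (rule at_within_nhd[of _ "{0<..}"]) auto

lemma continuous_on_from_derivative_atLeast_0:
  assumes "\<And>x. x \<in> S \<Longrightarrow> (\<phi> has_real_derivative \<phi>' x) (at x within {0..})" "S \<subseteq> {0..}"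
  shows "continuous_on S \<phi>"
  unfolding continuous_on_eq_continuous_within
  using assms by (metis DERIV_continuous continuous_within_subset)

lemma DERIV_nonpos_imp_decreasing_atLeast_0:
  fixes \<phi> :: "real \<Rightarrow> real"
  assumes deriv: "\<And>x. x \<in> {s..t} \<Longrightarrow> (\<phi> has_real_derivative \<phi>' x) (at x within {0..})"
    and nonpos: "\<And>x. x \<in> {s<..<t} \<Longrightarrow> \<phi>' x \<le> 0"
    and "0 \<le> s" "s \<le> t"
  shows "\<phi> t \<le> \<phi> s"
proof (rule DERIV_nonpos_imp_decreasing_open[OF \<open>s \<le> t\<close>])
  fix x assume x: "s < x" "x < t"
  then have "(\<phi> has_real_derivative \<phi>' x) (at x)"
    using deriv[of x] \<open>0 \<le> s\<close> at_within_atLeast_0[of x] by auto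
  then show "\<exists>y. (\<phi> has_real_derivative y) (at x) \<and> y \<le> 0"
    using nonpos[of x] x by auto
next
  show "continuous_on {s..t} \<phi>"
    by (rule continuous_on_from_derivative_atLeast_0[of _ _ \<phi>']) (use deriv \<open>0 \<le> s\<close> in auto)
qed

text \<open>Consider the last time in \<open>[0, t]\<close> at which \<open>\<phi> \<le> K\<close>.\<close>

lemma DERIV_nonpos_above_imp_stays_below:
  fixes \<phi> :: "real \<Rightarrow> real"
  assumes deriv: "\<And>x. x \<ge> 0 \<Longrightarrow> (\<phi> has_real_derivative \<phi>' x) (at x within {0..})"
    and nonpos: "\<And>x. x \<ge> 0 \<Longrightarrow> \<phi> x \<ge> K \<Longrightarrow> \<phi>' x \<le> 0"
    and "\<phi> 0 \<le> K" "t \<ge> 0"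
  shows "\<phi> t \<le> K"
proof (rule ccontr)
  assume "\<not> \<phi> t \<le> K"
  define S where "S = {x \<in> {0..t}. \<phi> x \<le> K}"
  have "continuous_on {0..t} \<phi>"
    by (rule continuous_on_from_derivative_atLeast_0[of _ _ \<phi>']) (use deriv in auto)
  then have "closed S"
    unfolding S_def by (intro continuous_on_closed_Collect_le continuous_on_const) auto
  moreover have "S \<noteq> {}" "bdd_above S"
    using assms by (auto simp: S_def bdd_above_def)
  ultimately have "Sup S \<in> S" by (rule closed_contains_Sup[rotated 2])
  then have s0: "0 \<le> Sup S" "Sup S \<le> t" "\<phi> (Sup S) \<le> K"
    by (auto simp: S_def)
  have above: "\<phi> x > K" if "Sup S < x" "x \<le> t" for x
  proof (rule ccontr)
    assume "\<not> \<phi> x > K"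
    then have "x \<in> S" using that s0 by (simp add: S_def)
    then have "x \<le> Sup S" using \<open>bdd_above S\<close> by (rule cSup_upper)
    then show False using that by simp
  qed
  have "\<phi> t \<le> \<phi> (Sup S)"
  proof (rule DERIV_nonpos_imp_decreasing_atLeast_0[where \<phi>=\<phi> and \<phi>'=\<phi>'])
    show "(\<phi> has_real_derivative \<phi>' x) (at x within {0..})" if "x \<in> {Sup S..t}" for x
      using deriv that s0 by auto
    show "\<phi>' x \<le> 0" if "x \<in> {Sup S<..<t}" for x
      using nonpos[of x] above[of x] that s0 by auto
  qed (use s0 in auto)
  then show False using \<open>\<not> \<phi> t \<le> K\<close> s0 by simp
qed

lemma DERIV_affine_bound_imp_exponential_bound:
  fixes \<phi> :: "real \<Rightarrow> real"
  assumes deriv: "\<And>s. s \<ge> 0 \<Longrightarrow> (\<phi> has_real_derivative \<phi>' s) (at s within {0..})"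
    and bound: "\<And>s. s \<ge> 0 \<Longrightarrow> \<phi>' s \<le> - a * \<phi> s + B"
    and "a > 0" "t \<ge> 0"
  shows "\<phi> t \<le> exp (- a * t) * (\<phi> 0 - B / a) + B / a"
proof -
  define \<psi>' where "\<psi>' s = exp (a * s) * (a * (\<phi> s - B / a) + \<phi>' s)" for s
  have deriv\<psi>: "((\<lambda>s. exp (a * s) * (\<phi> s - B / a)) has_real_derivative \<psi>' s) (at s within {0..})"
    if "s \<ge> 0" for s
    unfolding \<psi>'_def using deriv[OF that] by (auto intro!: derivative_eq_intros simp: algebra_simps)
  have nonpos\<psi>: "\<psi>' s \<le> 0" if "s \<ge> 0" for s
  proof -
    have "a * (\<phi> s - B / a) + \<phi>' s \<le> 0"
      using bound[OF that] \<open>a > 0\<close> by (simp add: right_diff_distrib)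
    then show ?thesis
      unfolding \<psi>'_def by (intro mult_nonneg_nonpos) auto
  qed
  have "exp (a * t) * (\<phi> t - B / a) \<le> exp (a * 0) * (\<phi> 0 - B / a)"
    by (rule DERIV_nonpos_imp_decreasing_atLeast_0[where \<phi>'=\<psi>'])
       (use deriv\<psi> nonpos\<psi> \<open>t \<ge> 0\<close> in auto)
  then show ?thesis
    by (simp add: exp_minus field_simps)
qed

lemma DERIV_linear_bound_imp_exponential_growth:
  fixes \<phi> :: "real \<Rightarrow> real"
  assumes deriv: "\<And>s. s \<in> {0..T} \<Longrightarrow> (\<phi> has_real_derivative \<phi>' s) (at s within {0..})"
    and bound: "\<And>s. s \<in> {0..T} \<Longrightarrow> \<phi>' s \<le> C * \<phi> s + B"
    and "C \<ge> 0" "B \<ge> 0" and t: "t \<in> {0..T}"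
  shows "\<phi> t \<le> exp (C * t) * (\<phi> 0 + B * t)"
proof -
  define \<psi>' where "\<psi>' s = exp (- C * s) * (\<phi>' s - C * \<phi> s) - B" for s
  have deriv\<psi>: "((\<lambda>s. exp (- C * s) * \<phi> s - B * s) has_real_derivative \<psi>' s) (at s within {0..})"
    if "s \<in> {0..T}" for s
    unfolding \<psi>'_def using deriv[OF that] by (auto intro!: derivative_eq_intros simp: algebra_simps)
  have nonpos\<psi>: "\<psi>' s \<le> 0" if "s \<in> {0..T}" for s
  proof -
    have "0 \<le> C * s"
      using that \<open>C \<ge> 0\<close> by simp
    then have "exp (- C * s) \<le> 1" by simp
    have "exp (- C * s) * (\<phi>' s - C * \<phi> s) \<le> exp (- C * s) * B"
      using bound[OF that] by (intro mult_left_mono) auto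
    also have "\<dots> \<le> B"
      using \<open>exp (- C * s) \<le> 1\<close> \<open>B \<ge> 0\<close> by (intro mult_left_le_one_le) auto
    finally show ?thesis by (simp add: \<psi>'_def)
  qed
  have "exp (- C * t) * \<phi> t - B * t \<le> exp (- C * 0) * \<phi> 0 - B * 0"
    by (rule DERIV_nonpos_imp_decreasing_atLeast_0[where \<phi>'=\<psi>'])
       (use deriv\<psi> nonpos\<psi> t in auto)
  then have "exp (C * t) * (exp (- C * t) * \<phi> t) \<le> exp (C * t) * (\<phi> 0 + B * t)"
    by (intro mult_left_mono) auto
  then show ?thesis
    by (simp add: mult.assoc[symmetric] exp_add[symmetric])
qed

lemma inner_le_of_norm_le_affine:
  fixes d w :: "'a::real_inner"
  assumes "norm w \<le> L * norm d + \<delta>"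
  shows "2 * (d \<bullet> w) \<le> (2 * L + 1) * (norm d)\<^sup>2 + \<delta>\<^sup>2"
proof -
  have "d \<bullet> w \<le> norm d * (L * norm d + \<delta>)"
    using norm_cauchy_schwarz[of d w] mult_left_mono[OF assms, of "norm d"] by simp
  also have "2 * \<dots> \<le> (2 * L + 1) * (norm d)\<^sup>2 + \<delta>\<^sup>2"
    using sum_squares_bound[of "norm d" \<delta>] by (simp add: power2_eq_square algebra_simps)
  finally show ?thesis by simp
qed

lemma gronwall_distance_bound:
  fixes u v :: "real \<Rightarrow> 'a::real_inner"
  assumes u: "\<And>s. s \<in> {0..T} \<Longrightarrow> (u has_vector_derivative u' s) (at s within {0..})"
    and v: "\<And>s. s \<in> {0..T} \<Longrightarrow> (v has_vector_derivative v' s) (at s within {0..})"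
    and close: "\<And>s. s \<in> {0..T} \<Longrightarrow> norm (u' s - v' s) \<le> L * norm (u s - v s) + \<delta>"
    and "L \<ge> 0" and t: "t \<in> {0..T}"
  shows "(norm (u t - v t))\<^sup>2 \<le> exp ((2 * L + 1) * t) * ((norm (u 0 - v 0))\<^sup>2 + \<delta>\<^sup>2 * t)"
proof (rule DERIV_linear_bound_imp_exponential_growth[where \<phi>="\<lambda>s. (norm (u s - v s))\<^sup>2"])
  fix s assume s: "s \<in> {0..T}"
  have "((\<lambda>s. u s - v s) has_vector_derivative u' s - v' s) (at s within {0..})"
    using u[OF s] v[OF s] by (rule has_vector_derivative_diff)
  from has_real_derivative_norm_diff_power2[OF this, of 0]
  show "((\<lambda>s. (norm (u s - v s))\<^sup>2) has_real_derivative 2 * ((u s - v s) \<bullet> (u' s - v' s)))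
          (at s within {0..})"
    by simp
  show "2 * ((u s - v s) \<bullet> (u' s - v' s)) \<le> (2 * L + 1) * (norm (u s - v s))\<^sup>2 + \<delta>\<^sup>2"
    by (rule inner_le_of_norm_le_affine[OF close[OF s]])
qed (use \<open>L \<ge> 0\<close> t in auto)

section \<open>Fields with a trapping ball\<close>

lemma closest_point_cball_outside:
  fixes x c :: "'a::euclidean_space"
  assumes "\<rho> > 0" and "norm (x - c) \<ge> \<rho>"
  shows "closest_point (cball c \<rho>) x = c + (\<rho> / norm (x - c)) *\<^sub>R (x - c)"
proof (rule closest_point_unique[symmetric])
  define m where "m = norm (x - c)"
  have m: "m > 0" "m \<ge> \<rho>" using assms by (auto simp: m_def)
  show "c + (\<rho> / norm (x - c)) *\<^sub>R (x - c) \<in> cball c \<rho>"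
    using m assms by (simp add: m_def dist_norm)
  have "x - (c + (\<rho> / m) *\<^sub>R (x - c)) = (1 - \<rho> / m) *\<^sub>R (x - c)"
    by (simp add: algebra_simps)
  then have "dist x (c + (\<rho> / m) *\<^sub>R (x - c)) = \<bar>1 - \<rho> / m\<bar> * m"
    by (simp add: dist_norm m_def)
  also have "\<dots> = m - \<rho>" using m by (simp add: field_simps)
  finally have "dist x (c + (\<rho> / m) *\<^sub>R (x - c)) = dist x c - \<rho>"
    by (simp add: m_def dist_norm)
  moreover have "dist x c - \<rho> \<le> dist x z" if "z \<in> cball c \<rho>" for z
    using dist_triangle[of x c z] that by (simp add: dist_commute)
  ultimately show "\<forall>z\<in>cball c \<rho>. dist x (c + (\<rho> / norm (x - c)) *\<^sub>R (x - c)) \<le> dist x z"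
    by (simp add: m_def)
qed auto

lemma bounded_lipschitz_field_closest_point_cball:
  fixes f :: "'a::euclidean_space \<Rightarrow> 'a"
  assumes lipschitz: "\<And>p q. p \<in> cball c \<rho> \<Longrightarrow> q \<in> cball c \<rho> \<Longrightarrow> norm (f p - f q) \<le> L * norm (p - q)"
    and "L \<ge> 0" "\<rho> > 0"
  shows "bounded_lipschitz_field (\<lambda>p. f (closest_point (cball c \<rho>) p)) L (norm (f c) + L * \<rho>)"
proof
  define pr where "pr = closest_point (cball c \<rho>)"
  have pr: "pr p \<in> cball c \<rho>" for p
    unfolding pr_def using \<open>\<rho> > 0\<close> by (intro closest_point_in_set) auto
  show "norm (f (pr p) - f (pr q)) \<le> L * norm (p - q)" for p q
  proof -
    have "norm (f (pr p) - f (pr q)) \<le> L * norm (pr p - pr q)"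
      by (rule lipschitz[OF pr pr])
    also have "norm (pr p - pr q) \<le> norm (p - q)"
      using closest_point_lipschitz[of "cball c \<rho>" p q] \<open>\<rho> > 0\<close> by (simp add: pr_def dist_norm)
    finally show ?thesis
      using \<open>L \<ge> 0\<close> by (simp add: mult_left_mono)
  qed
  show "norm (f (pr p)) \<le> norm (f c) + L * \<rho>" for p
  proof -
    have "norm (f (pr p) - f c) \<le> L * norm (pr p - c)"
      using \<open>\<rho> > 0\<close> by (intro lipschitz pr) simp
    also have "\<dots> \<le> L * \<rho>"
      using pr[of p] \<open>L \<ge> 0\<close> by (intro mult_left_mono) (auto simp: dist_norm norm_minus_commute)
    finally show ?thesis
      using norm_triangle_sub[of "f (pr p)" "f c"] by linarith
  qed
qed fact

text \<open>Outside the ball, the field \<open>f \<circ> closest_point (cball c \<rho>)\<close> is a positive multiple, in the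
  radial direction, of the inward field on the sphere.\<close>

lemma inner_closest_point_cball_nonpos:
  fixes f :: "'a::euclidean_space \<Rightarrow> 'a"
  assumes inward: "\<And>p. dist c p = \<rho> \<Longrightarrow> (p - c) \<bullet> f p \<le> 0"
    and "\<rho> > 0" "norm (p - c) \<ge> \<rho>"
  shows "(p - c) \<bullet> f (closest_point (cball c \<rho>) p) \<le> 0"
proof -
  define m where "m = norm (p - c)"
  have m: "m \<ge> \<rho>" "m > 0" using assms by (auto simp: m_def)
  define q where "q = c + (\<rho> / m) *\<^sub>R (p - c)"
  have "closest_point (cball c \<rho>) p = q"
    using closest_point_cball_outside[OF \<open>\<rho> > 0\<close> \<open>norm (p - c) \<ge> \<rho>\<close>] by (simp add: q_def m_def)
  moreover have "p - c = (m / \<rho>) *\<^sub>R (q - c)"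
    using m \<open>\<rho> > 0\<close> by (simp add: q_def)
  moreover have "dist c q = \<rho>"
    using m \<open>\<rho> > 0\<close> by (simp add: q_def dist_norm m_def)
  ultimately show ?thesis
    using inward[of q] m \<open>\<rho> > 0\<close> by (simp add: mult_nonneg_nonpos divide_nonpos_pos)
qed

lemma trapping_ball_solution:
  fixes f :: "'a::euclidean_space \<Rightarrow> 'a"
  assumes lipschitz: "\<And>p q. p \<in> cball c \<rho> \<Longrightarrow> q \<in> cball c \<rho> \<Longrightarrow> norm (f p - f q) \<le> L * norm (p - q)"
    and inward: "\<And>p. dist c p = \<rho> \<Longrightarrow> (p - c) \<bullet> f p \<le> 0"
    and "L \<ge> 0" "\<rho> > 0" and x0: "x0 \<in> cball c \<rho>"
  obtains u where "u 0 = x0"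
    "\<And>s. s \<ge> 0 \<Longrightarrow> (u has_vector_derivative f (u s)) (at s within {0..})"
    "\<And>s. s \<ge> 0 \<Longrightarrow> u s \<in> cball c \<rho>"
proof -
  define g where "g p = f (closest_point (cball c \<rho>) p)" for p
  obtain u where u0: "u 0 = x0"
    and u: "\<And>s. s \<ge> 0 \<Longrightarrow> (u has_vector_derivative g (u s)) (at s within {0..})"
    using bounded_lipschitz_field.global_solution[OF bounded_lipschitz_field_closest_point_cball[OF
        lipschitz \<open>L \<ge> 0\<close> \<open>\<rho> > 0\<close>]] unfolding g_def by blast
  have "(norm (u s - c))\<^sup>2 \<le> \<rho>\<^sup>2" if "s \<ge> 0" for s
  proof (rule DERIV_nonpos_above_imp_stays_below[OF has_real_derivative_norm_diff_power2[OF u]])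
    show "2 * ((u x - c) \<bullet> g (u x)) \<le> 0" if "\<rho>\<^sup>2 \<le> (norm (u x - c))\<^sup>2" for x
      using inner_closest_point_cball_nonpos[OF inward \<open>\<rho> > 0\<close>, of "u x"] that \<open>\<rho> > 0\<close>
      by (simp add: g_def power2_le_iff_abs_le)
  qed (use x0 u0 that \<open>\<rho> > 0\<close> in \<open>auto simp: dist_norm norm_minus_commute intro: power_mono\<close>)
  then have inside: "u s \<in> cball c \<rho>" if "s \<ge> 0" for s
    using that \<open>\<rho> > 0\<close> by (simp add: dist_norm norm_minus_commute power2_le_iff_abs_le)
  then have "g (u s) = f (u s)" if "s \<ge> 0" for s
    using that by (simp add: g_def closest_point_self)
  then show ?thesis
    using that u0 u inside by auto
qed

section \<open>Attractors of dissipative semiflows\<close>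

locale dissipative_semiflow =
  fixes S :: "real \<Rightarrow> 'a::metric_space \<Rightarrow> 'a" and K :: "'a set"
  assumes compact_absorbing: "compact K" and absorbing_nonempty: "K \<noteq> {}"
    and semigroup: "0 \<le> s \<Longrightarrow> 0 \<le> t \<Longrightarrow> S t (S s x) = S (t + s) x"
    and continuous: "0 \<le> t \<Longrightarrow> isCont (S t) x"
    and absorbs: "bounded B \<Longrightarrow> \<exists>T. \<forall>t\<ge>T. \<forall>x\<in>B. S t x \<in> K"
begin

definition attractor :: "'a set" where
  "attractor = {y. \<forall>e>0. \<forall>T. \<exists>t\<ge>T. \<exists>x\<in>K. dist (S t x) y < e}"

lemma absorbsE:
  assumes "bounded B"
  obtains T where "T \<ge> 0" "\<And>t x. t \<ge> T \<Longrightarrow> x \<in> B \<Longrightarrow> S t x \<in> K"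
proof -
  obtain T where "\<forall>t\<ge>T. \<forall>x\<in>B. S t x \<in> K"
    using absorbs[OF assms] by blast
  then show ?thesis
    using that[of "max T 0"] by auto
qed

lemma absorbs_itselfE:
  obtains T where "T \<ge> 0" "\<And>t x. t \<ge> T \<Longrightarrow> x \<in> K \<Longrightarrow> S t x \<in> K"
  using absorbsE[OF compact_imp_bounded[OF compact_absorbing]] by blast

lemma attractorI:
  assumes "\<And>n. t n \<ge> real n" "\<And>n. x n \<in> K" "(\<lambda>n. S (t n) (x n)) \<longlonglongrightarrow> z"
  shows "z \<in> attractor"
  unfolding attractor_def
proof (intro CollectI allI impI)
  fix e :: real and T :: real assume "e > 0"
  then obtain N where N: "\<And>n. n \<ge> N \<Longrightarrow> dist (S (t n) (x n)) z < e"
    using assms(3) unfolding lim_sequentially by blast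
  define n where "n = max N (nat \<lceil>T\<rceil>)"
  have "t n \<ge> T"
    using assms(1)[of n] real_nat_ceiling_ge[of T] of_nat_mono[of "nat \<lceil>T\<rceil>" n]
    by (simp add: n_def)
  then show "\<exists>t'\<ge>T. \<exists>x'\<in>K. dist (S t' x') z < e"
    using N[of n] assms(2)[of n] by (auto simp: n_def)
qed

lemma attractor_limit_point:
  assumes "\<And>n. x n \<in> K" "\<And>n. t n \<ge> real n" "\<And>n. S (t n) (x n) \<in> K"
  obtains r z where "strict_mono r" "(\<lambda>n. S (t (r n)) (x (r n))) \<longlonglongrightarrow> z" "z \<in> attractor"
proof -
  have "seq_compact K" "\<forall>n. S (t n) (x n) \<in> K"
    using compact_imp_seq_compact[OF compact_absorbing] assms(3) by auto
  then obtain z r where "z \<in> K" and r: "strict_mono r" and z: "((\<lambda>n. S (t n) (x n)) \<circ> r) \<longlonglongrightarrow> z"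
    by (rule seq_compactE)
  have "z \<in> attractor"
  proof (rule attractorI[where t="t \<circ> r" and x="x \<circ> r"])
    show "real n \<le> (t \<circ> r) n" for n
      using seq_suble[OF r, of n] assms(2)[of "r n"] by simp
  qed (use assms(1) z in \<open>auto simp: o_def\<close>)
  then show ?thesis
    using that r z by (simp add: o_def)
qed

lemma closed_attractor: "closed attractor"
  unfolding closed_limpt
proof (intro allI impI)
  fix y assume "y islimpt attractor"
  show "y \<in> attractor" unfolding attractor_def
  proof (intro CollectI allI impI)
    fix e :: real and T :: real assume "e > 0"
    then have "e / 2 > 0" by simp
    then obtain y' where y': "y' \<in> attractor" "dist y' y < e / 2"
      using \<open>y islimpt attractor\<close> unfolding islimpt_approachable by blast
    then obtain t x where "t \<ge> T" "x \<in> K" "dist (S t x) y' < e / 2"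
      using \<open>e / 2 > 0\<close> unfolding attractor_def by blast
    moreover have "dist (S t x) y < e"
      using \<open>dist (S t x) y' < e / 2\<close> y'(2) dist_triangle[of "S t x" y y'] by linarith
    ultimately show "\<exists>t\<ge>T. \<exists>x\<in>K. dist (S t x) y < e"
      by blast
  qed
qed

lemma attractor_subset: "attractor \<subseteq> K"
proof
  fix y assume "y \<in> attractor"
  obtain T where T: "\<And>t x. t \<ge> T \<Longrightarrow> x \<in> K \<Longrightarrow> S t x \<in> K"
    using absorbs_itselfE by blast
  have "\<exists>p\<in>K. dist p y < e" if "e > 0" for e
  proof -
    obtain t x where "t \<ge> T" "x \<in> K" "dist (S t x) y < e"
      using \<open>y \<in> attractor\<close> \<open>e > 0\<close> unfolding attractor_def by blast
    then show ?thesis using T by blast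
  qed
  then show "y \<in> K"
    using closed_approachable[OF compact_imp_closed[OF compact_absorbing]] by blast
qed

lemma compact_attractor: "compact attractor"
  using compact_Int_closed[OF compact_absorbing closed_attractor] attractor_subset
  by (simp add: Int_absorb1)

lemma attractor_nonempty: "attractor \<noteq> {}"
proof -
  obtain T where T: "T \<ge> 0" "\<And>t x. t \<ge> T \<Longrightarrow> x \<in> K \<Longrightarrow> S t x \<in> K"
    using absorbs_itselfE by blast
  obtain x where x: "x \<in> K"
    using absorbing_nonempty by blast
  obtain r z where "z \<in> attractor"
  proof (rule attractor_limit_point[of "\<lambda>_. x" "\<lambda>n. real n + T"])
    show "x \<in> K" "real n \<le> real n + T" "S (real n + T) x \<in> K" for n
      using x T by auto
  qed
  then show ?thesis by blast
qed

lemma attractor_attracts: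
  assumes "bounded B" "e > 0"
  shows "\<exists>T. \<forall>t\<ge>T. \<forall>x\<in>B. infdist (S t x) attractor < e"
proof (rule ccontr)
  assume not_attracted: "\<not> ?thesis"
  obtain TB where TB: "TB \<ge> 0" "\<And>t x. t \<ge> TB \<Longrightarrow> x \<in> B \<Longrightarrow> S t x \<in> K"
    using absorbsE[OF \<open>bounded B\<close>] by blast
  obtain TK where TK: "TK \<ge> 0" "\<And>t x. t \<ge> TK \<Longrightarrow> x \<in> K \<Longrightarrow> S t x \<in> K"
    using absorbs_itselfE by blast
  have "\<forall>n. \<exists>t x. t \<ge> real n + TB + TK \<and> x \<in> B \<and> infdist (S t x) attractor \<ge> e"
    using not_attracted by (meson not_le)
  then obtain t x where tx: "\<And>n. t n \<ge> real n + TB + TK" "\<And>n. x n \<in> B"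
      "\<And>n. infdist (S (t n) (x n)) attractor \<ge> e"
    by metis
  define x' where "x' n = S TB (x n)" for n
  define t' where "t' n = t n - TB" for n
  have flow: "S (t' n) (x' n) = S (t n) (x n)" for n
    using semigroup[OF TB(1), of "t' n" "x n"] tx(1)[of n] TK(1) by (simp add: x'_def t'_def)
  have x': "x' n \<in> K" for n
    using TB(2)[OF _ tx(2)] by (simp add: x'_def)
  obtain r z where "(\<lambda>n. S (t' (r n)) (x' (r n))) \<longlonglongrightarrow> z" "z \<in> attractor"
  proof (rule attractor_limit_point[OF x'])
    show "t' n \<ge> real n" for n
      using tx(1)[of n] TK(1) by (simp add: t'_def)
    show "S (t' n) (x' n) \<in> K" for n
      using TK(2)[OF _ x'] tx(1)[of n] by (simp add: t'_def)
  qed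
  then obtain N where "dist (S (t' (r N)) (x' (r N))) z < e" "z \<in> attractor"
    using \<open>e > 0\<close> unfolding lim_sequentially by blast
  then show False
    using infdist_le[of z attractor "S (t (r N)) (x (r N))"] flow[of "r N"] tx(3)[of "r N"] by simp
qed

lemma attractor_forward_invariant:
  assumes "t \<ge> 0"
  shows "S t ` attractor \<subseteq> attractor"
proof
  fix w assume "w \<in> S t ` attractor"
  then obtain y where y: "y \<in> attractor" "w = S t y" by blast
  show "w \<in> attractor" unfolding attractor_def y(2)
  proof (intro CollectI allI impI)
    fix e :: real and T :: real assume "e > 0"
    then obtain d where d: "d > 0" "\<And>z. dist z y < d \<Longrightarrow> dist (S t z) (S t y) < e"
      using continuous[OF assms, of y] unfolding continuous_at_eps_delta by blast
    obtain t' x where tx: "t' \<ge> max T 0" "x \<in> K" "dist (S t' x) y < d"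
      using y(1) d(1) unfolding attractor_def by blast
    have "S (t + t') x = S t (S t' x)"
      using semigroup[OF _ assms] tx(1) by simp
    moreover have "t + t' \<ge> T"
      using tx(1) assms by simp
    ultimately show "\<exists>t'\<ge>T. \<exists>x\<in>K. dist (S t' x) (S t y) < e"
      using d(2)[OF tx(3)] tx(2) by metis
  qed
qed

text \<open>Take \<open>S (s n) (x n) \<longlonglongrightarrow> y\<close> with \<open>s n \<to> \<infinity>\<close>; a limit point of \<open>S (s n - t) (x n)\<close> is a
  preimage of \<open>y\<close> in the attractor.\<close>

lemma attractor_backward_invariant:
  assumes "t \<ge> 0"
  shows "attractor \<subseteq> S t ` attractor"
proof
  fix y assume y: "y \<in> attractor"
  obtain TK where TK: "TK \<ge> 0" "\<And>t x. t \<ge> TK \<Longrightarrow> x \<in> K \<Longrightarrow> S t x \<in> K"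
    using absorbs_itselfE by blast
  have "\<forall>n. \<exists>s x. s \<ge> real n + t + TK \<and> x \<in> K \<and> dist (S s x) y < inverse (real (Suc n))"
  proof
    fix n
    have "inverse (real (Suc n)) > 0" by simp
    then show "\<exists>s x. s \<ge> real n + t + TK \<and> x \<in> K \<and> dist (S s x) y < inverse (real (Suc n))"
      using y unfolding attractor_def by blast
  qed
  then obtain s x where sx: "\<And>n. s n \<ge> real n + t + TK" "\<And>n. x n \<in> K"
      "\<And>n. dist (S (s n) (x n)) y < inverse (real (Suc n))"
    by metis
  define s' where "s' n = s n - t" for n
  obtain r z where r: "strict_mono r" and z: "(\<lambda>n. S (s' (r n)) (x (r n))) \<longlonglongrightarrow> z" "z \<in> attractor"
  proof (rule attractor_limit_point[OF sx(2)])
    show "s' n \<ge> real n" for n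
      using sx(1)[of n] TK(1) by (simp add: s'_def)
    show "S (s' n) (x n) \<in> K" for n
      using TK(2)[OF _ sx(2)] sx(1)[of n] by (simp add: s'_def)
  qed
  have flow: "S t (S (s' n) (x n)) = S (s n) (x n)" for n
    using semigroup[OF _ assms, of "s' n" "x n"] sx(1)[of n] TK(1) by (simp add: s'_def)
  have "(\<lambda>n. dist (S (s n) (x n)) y) \<longlonglongrightarrow> 0"
  proof (rule Lim_null_comparison[OF _ LIMSEQ_inverse_real_of_nat])
    show "\<forall>\<^sub>F n in sequentially. norm (dist (S (s n) (x n)) y) \<le> inverse (real (Suc n))"
      using sx(3) by (simp add: less_imp_le)
  qed
  then have "(\<lambda>n. S (s n) (x n)) \<longlonglongrightarrow> y"
    by (rule tendsto_dist_iff[THEN iffD2])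
  then have "(\<lambda>n. S (s (r n)) (x (r n))) \<longlonglongrightarrow> y"
    using LIMSEQ_subseq_LIMSEQ[OF _ r] by (simp add: o_def)
  moreover have "(\<lambda>n. S (s (r n)) (x (r n))) \<longlonglongrightarrow> S t z"
    using isCont_tendsto_compose[OF continuous[OF assms] z(1)] by (simp add: flow)
  ultimately have "S t z = y"
    using LIMSEQ_unique by blast
  then show "y \<in> S t ` attractor"
    using z(2) by blast
qed

lemma attractor_invariant: "t \<ge> 0 \<Longrightarrow> S t ` attractor = attractor"
  using attractor_forward_invariant attractor_backward_invariant by blast

end

lemma global_attractor_unique:
  assumes "is_global_attractor S A" "is_global_attractor S A'"
  shows "A = A'"
proof -
  have "A \<subseteq> A'" if A: "is_global_attractor S A" and A': "is_global_attractor S A'" for A A'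
  proof
    fix a assume "a \<in> A"
    have "bounded A" "\<forall>t\<ge>0. S t ` A = A"
      using A compact_imp_bounded by (auto simp: is_global_attractor_def)
    moreover have "\<forall>B. bounded B \<longrightarrow> (\<forall>e>0. \<exists>T. \<forall>t\<ge>T. \<forall>x\<in>B. infdist (S t x) A' < e)"
      using A' by (simp add: is_global_attractor_def)
    ultimately have "infdist a A' < e" if "e > 0" for e
    proof -
      obtain T where T: "\<forall>t\<ge>T. \<forall>x\<in>A. infdist (S t x) A' < e"
        using \<open>bounded A\<close> \<open>\<forall>B. bounded B \<longrightarrow> _\<close> \<open>e > 0\<close> by blast
      have "a \<in> S (max T 0) ` A"
        using \<open>\<forall>t\<ge>0. S t ` A = A\<close> \<open>a \<in> A\<close> by simp
      then show ?thesis using T by auto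
    qed
    then have "\<not> infdist a A' > 0"
      by blast
    then have "infdist a A' = 0"
      using infdist_nonneg[of a A'] by linarith
    moreover have "closed A'" "A' \<noteq> {}"
      using A' compact_imp_closed by (auto simp: is_global_attractor_def)
    ultimately show "a \<in> A'"
      using in_closed_iff_infdist_zero by blast
  qed
  then show ?thesis using assms by blast
qed

lemma dissipative_semiflow_global_attractor:
  fixes S :: "real \<Rightarrow> R3 \<Rightarrow> R3"
  assumes "dissipative_semiflow S K"
  shows "is_global_attractor S (dissipative_semiflow.attractor S K)"
  unfolding is_global_attractor_def
  using dissipative_semiflow.attractor_nonempty[OF assms] dissipative_semiflow.compact_attractor[OF assms]
    dissipative_semiflow.attractor_invariant[OF assms] dissipative_semiflow.attractor_attracts[OF assms]
  by simp

section \<open>Generic continuity of upper semicontinuous families\<close>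

lemma nowhere_dense_closure_diff_open:
  assumes "open U"
  shows "nowhere_dense (closure U - U)"
proof -
  have "interior (closure U - U) \<inter> U = {}"
    using interior_subset by blast
  then have "interior (closure U - U) \<inter> closure U = {}"
    by (simp add: open_Int_closure_eq_empty)
  then have "interior (closure U - U) = {}"
    using interior_subset by blast
  then show ?thesis
    unfolding nowhere_dense_def using assms by (simp add: closed_Diff)
qed

lemma dense_complement_of_nowhere_dense_Union:
  fixes N :: "nat \<Rightarrow> 'a::{real_normed_vector,heine_borel} set"
  assumes "open X" "\<And>n. nowhere_dense (N n)"
  shows "X \<subseteq> closure (X - (\<Union>n. N n))"
proof
  fix x assume "x \<in> X"
  have "UNIV \<subseteq> closure (\<Inter>(range (\<lambda>n. - closure (N n))))"
  proof (rule Baire)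
    fix T assume "T \<in> range (\<lambda>n. - closure (N n))"
    then obtain n where T: "T = - closure (N n)" by blast
    show "openin (top_of_set UNIV) T \<and> UNIV \<subseteq> closure T"
      using assms(2)[of n] by (simp add: T closure_complement nowhere_dense_def open_Compl)
  qed auto
  then have "x \<in> closure (\<Inter>n. - closure (N n))" by auto
  then have "x \<in> closure (X \<inter> (\<Inter>n. - closure (N n)))"
    using \<open>x \<in> X\<close> \<open>open X\<close> by (simp add: open_Int_closure_subset[THEN subsetD])
  moreover have "X \<inter> (\<Inter>n. - closure (N n)) \<subseteq> X - (\<Union>n. N n)"
    using closure_subset by blast
  ultimately show "x \<in> closure (X - (\<Union>n. N n))"
    using closure_mono by blast
qed

lemma eventually_nhds_inf_principal_metric:
  "eventually P (inf (nhds x) (principal S)) \<longleftrightarrow> (\<exists>d>0. \<forall>y\<in>S. dist y x < d \<longrightarrow> P y)"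
  unfolding eventually_inf_principal eventually_nhds_metric by blast

lemma hausdorff_dist_le:
  assumes "A \<noteq> {}" "C \<noteq> {}" "\<And>a. a \<in> A \<Longrightarrow> infdist a C \<le> e" "\<And>c. c \<in> C \<Longrightarrow> infdist c A \<le> e"
  shows "hausdorff_dist A C \<le> e"
  unfolding hausdorff_dist_def using assms by (simp add: cSUP_least)

locale upper_semicontinuous_family =
  fixes X :: "'a::{real_normed_vector,heine_borel} set"
    and A :: "'a \<Rightarrow> 'b::{metric_space,second_countable_topology} set"
  assumes open_domain: "open X"
    and compact_values: "lam \<in> X \<Longrightarrow> compact (A lam)"
    and nonempty_values: "lam \<in> X \<Longrightarrow> A lam \<noteq> {}"
    and upper_semicontinuous: "lam \<in> X \<Longrightarrow> e > 0 \<Longrightarrow>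
          \<exists>d>0. \<forall>mu\<in>X. dist mu lam < d \<longrightarrow> (\<forall>a\<in>A mu. infdist a (A lam) < e)"
begin

definition far_set :: "'b \<Rightarrow> real \<Rightarrow> 'a set" where
  "far_set q \<rho> = {lam \<in> X. infdist q (A lam) > \<rho>}"

lemma open_far_set: "open (far_set q \<rho>)"
  unfolding open_dist
proof
  fix lam assume "lam \<in> far_set q \<rho>"
  then have lam: "lam \<in> X" and far: "infdist q (A lam) > \<rho>" by (auto simp: far_set_def)
  define e where "e = (infdist q (A lam) - \<rho>) / 2"
  have "e > 0" using far by (simp add: e_def)
  obtain d1 where d1: "d1 > 0" "\<And>mu. mu \<in> X \<Longrightarrow> dist mu lam < d1 \<Longrightarrow> \<forall>a\<in>A mu. infdist a (A lam) < e"
    using upper_semicontinuous[OF lam \<open>e > 0\<close>] by blast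
  obtain d2 where d2: "d2 > 0" "ball lam d2 \<subseteq> X"
    using open_domain lam open_contains_ball by blast
  have "mu \<in> far_set q \<rho>" if "dist mu lam < min d1 d2" for mu
  proof -
    have mu: "mu \<in> X" "dist mu lam < d1" using that d2 by (auto simp: dist_commute)
    have "infdist q (A lam) - e \<le> infdist q (A mu)"
    proof (subst infdist_notempty[OF nonempty_values[OF mu(1)]], rule cINF_greatest)
      show "A mu \<noteq> {}" by (rule nonempty_values[OF mu(1)])
      fix a assume "a \<in> A mu"
      have "infdist q (A lam) \<le> infdist a (A lam) + dist q a" by (rule infdist_triangle)
      then show "infdist q (A lam) - e \<le> dist q a"
        using d1(2)[OF mu] \<open>a \<in> A mu\<close> by fastforce
    qed
    moreover have "\<rho> < infdist q (A lam) - e"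
      using far by (simp add: e_def field_simps)
    ultimately have "\<rho> < infdist q (A mu)"
      by linarith
    then show ?thesis
      using mu(1) by (simp add: far_set_def)
  qed
  then show "\<exists>d>0. \<forall>mu. dist mu lam < d \<longrightarrow> mu \<in> far_set q \<rho>"
    using d1(1) d2(1) by (metis min_less_iff_conj)
qed

lemma infdist_upper_semicontinuous:
  assumes lam: "lam \<in> X" and regular: "\<And>\<rho>. \<rho> \<in> \<rat> \<Longrightarrow> lam \<notin> closure (far_set q \<rho>) - far_set q \<rho>"
    and "e > 0"
  shows "\<exists>d>0. \<forall>mu\<in>X. dist mu lam < d \<longrightarrow> infdist q (A mu) < infdist q (A lam) + e"
proof -
  obtain \<rho> where \<rho>: "\<rho> \<in> \<rat>" "infdist q (A lam) < \<rho>" "\<rho> < infdist q (A lam) + e"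
    using Rats_dense_in_real[of "infdist q (A lam)" "infdist q (A lam) + e"] \<open>e > 0\<close> by auto
  have "lam \<notin> far_set q \<rho>" using \<rho>(2) by (simp add: far_set_def)
  then have "lam \<notin> closure (far_set q \<rho>)"
    using regular[OF \<rho>(1)] by blast
  then obtain d where d: "d > 0" "\<And>mu. mu \<in> far_set q \<rho> \<Longrightarrow> \<not> dist mu lam < d"
    unfolding closure_approachable by auto
  have "infdist q (A mu) < infdist q (A lam) + e" if "mu \<in> X" "dist mu lam < d" for mu
    using d(2)[of mu] that \<rho>(3) by (force simp: far_set_def)
  then show ?thesis using d(1) by blast
qed

text \<open>Cover \<open>A lam\<close> by finitely many small balls whose centres are close to points of the dense
  set, and apply the previous lemma to these finitely many points.\<close>

lemma lower_semicontinuous: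
  assumes lam: "lam \<in> X" and dense: "\<And>y e. e > 0 \<Longrightarrow> \<exists>q\<in>D. dist y q < e"
    and regular: "\<And>q \<rho>. q \<in> D \<Longrightarrow> \<rho> \<in> \<rat> \<Longrightarrow> lam \<notin> closure (far_set q \<rho>) - far_set q \<rho>"
    and "e > 0"
  shows "\<exists>d>0. \<forall>mu\<in>X. dist mu lam < d \<longrightarrow> (\<forall>c\<in>A lam. infdist c (A mu) < e)"
proof -
  have "e / 4 > 0" using \<open>e > 0\<close> by simp
  obtain k where k: "k \<subseteq> A lam" "finite k" "A lam \<subseteq> (\<Union>y\<in>k. ball y (e / 4))"
    by (rule compactE_image[OF compact_values[OF lam], of "A lam" "\<lambda>y. ball y (e / 4)"])
       (use \<open>e / 4 > 0\<close> in auto)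
  obtain q where q: "\<And>y. q y \<in> D" "\<And>y. dist y (q y) < e / 4"
    using dense[OF \<open>e / 4 > 0\<close>] by metis
  have "\<forall>y\<in>k. eventually (\<lambda>mu. infdist (q y) (A mu) < e / 2) (inf (nhds lam) (principal X))"
  proof
    fix y assume "y \<in> k"
    have "infdist (q y) (A lam) \<le> dist (q y) y"
      using \<open>y \<in> k\<close> k(1) by (intro infdist_le) auto
    then have "infdist (q y) (A lam) + e / 4 < e / 2"
      using q(2)[of y] by (simp add: dist_commute)
    then show "eventually (\<lambda>mu. infdist (q y) (A mu) < e / 2) (inf (nhds lam) (principal X))"
      using infdist_upper_semicontinuous[OF lam regular[OF q(1)] \<open>e / 4 > 0\<close>]
      unfolding eventually_nhds_inf_principal_metric by (meson order.strict_trans)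
  qed
  then have "eventually (\<lambda>mu. \<forall>y\<in>k. infdist (q y) (A mu) < e / 2) (inf (nhds lam) (principal X))"
    by (rule eventually_ball_finite[OF k(2)])
  then obtain d where d: "d > 0" "\<And>mu. mu \<in> X \<Longrightarrow> dist mu lam < d \<Longrightarrow> \<forall>y\<in>k. infdist (q y) (A mu) < e / 2"
    unfolding eventually_nhds_inf_principal_metric by blast
  have "infdist c (A mu) < e" if "mu \<in> X" "dist mu lam < d" "c \<in> A lam" for mu c
  proof -
    obtain y where y: "y \<in> k" "dist c y < e / 4"
      using k(3) \<open>c \<in> A lam\<close> by (auto simp: dist_commute)
    have "infdist c (A mu) \<le> infdist (q y) (A mu) + dist c (q y)"
      by (rule infdist_triangle)
    moreover have "dist c (q y) \<le> dist c y + dist y (q y)"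
      by (rule dist_triangle)
    ultimately show ?thesis
      using d(2)[OF that(1,2)] y q(2)[of y] by fastforce
  qed
  then show ?thesis using d(1) by blast
qed

lemma hausdorff_continuous_at:
  assumes lam: "lam \<in> X" and dense: "\<And>y e. e > 0 \<Longrightarrow> \<exists>q\<in>D. dist y q < e"
    and regular: "\<And>q \<rho>. q \<in> D \<Longrightarrow> \<rho> \<in> \<rat> \<Longrightarrow> lam \<notin> closure (far_set q \<rho>) - far_set q \<rho>"
    and "e > 0"
  shows "\<exists>d>0. \<forall>mu\<in>X. dist mu lam < d \<longrightarrow> hausdorff_dist (A mu) (A lam) < e"
proof -
  have "e / 2 > 0" using \<open>e > 0\<close> by simp
  obtain d1 where d1: "d1 > 0" "\<forall>mu\<in>X. dist mu lam < d1 \<longrightarrow> (\<forall>a\<in>A mu. infdist a (A lam) < e / 2)"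
    using upper_semicontinuous[OF lam \<open>e / 2 > 0\<close>] by blast
  obtain d2 where d2: "d2 > 0" "\<forall>mu\<in>X. dist mu lam < d2 \<longrightarrow> (\<forall>c\<in>A lam. infdist c (A mu) < e / 2)"
    using lower_semicontinuous[OF lam dense regular \<open>e / 2 > 0\<close>] by blast
  have "hausdorff_dist (A mu) (A lam) \<le> e / 2" if "mu \<in> X" "dist mu lam < min d1 d2" for mu
    using d1(2) d2(2) that nonempty_values[OF lam] nonempty_values[OF \<open>mu \<in> X\<close>]
    by (intro hausdorff_dist_le) (auto simp: less_imp_le)
  then show ?thesis
    using d1(1) d2(1) \<open>e > 0\<close> by (intro exI[of _ "min d1 d2"]) force
qed

theorem continuous_on_residual:
  "\<exists>L. residual_in L X \<and> dense_in L X \<and>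
     (\<forall>lam\<in>L. \<forall>e>0. \<exists>d>0. \<forall>mu\<in>X. dist mu lam < d \<longrightarrow> hausdorff_dist (A mu) (A lam) < e)"
proof -
  obtain D :: "'b set" where D: "countable D" "\<And>U. open U \<Longrightarrow> U \<noteq> {} \<Longrightarrow> \<exists>d\<in>D. d \<in> U"
    using countable_dense_setE by blast
  have dense: "\<exists>q\<in>D. dist y q < e" if "e > 0" for y e
    using D(2)[of "ball y e"] that by (auto simp: dist_commute)
  define I where "I = D \<times> (\<rat> :: real set)"
  have "countable I" unfolding I_def using D(1) countable_rat by blast
  define N where "N n = (case from_nat_into I n of (q, \<rho>) \<Rightarrow> closure (far_set q \<rho>) - far_set q \<rho>)" for n
  have nowhere: "nowhere_dense (N n)" for n
    by (simp add: N_def nowhere_dense_closure_diff_open open_far_set split: prod.split)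
  define L where "L = X - (\<Union>n. N n)"
  have regular: "lam \<notin> closure (far_set q \<rho>) - far_set q \<rho>" if "lam \<in> L" "q \<in> D" "\<rho> \<in> \<rat>" for lam q \<rho>
  proof -
    have "(q, \<rho>) \<in> I" using that by (simp add: I_def)
    then obtain n where "from_nat_into I n = (q, \<rho>)"
      using from_nat_into_surj[OF \<open>countable I\<close>] by blast
    moreover have "lam \<notin> N n" using that(1) by (simp add: L_def)
    ultimately show ?thesis by (simp add: N_def)
  qed
  have "\<exists>d>0. \<forall>mu\<in>X. dist mu lam < d \<longrightarrow> hausdorff_dist (A mu) (A lam) < e"
    if "lam \<in> L" "e > 0" for lam e
    using that by (intro hausdorff_continuous_at[OF _ dense regular]) (auto simp: L_def)
  moreover have "residual_in L X"
    unfolding residual_in_def L_def using nowhere by blast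
  moreover have "dense_in L X"
    unfolding dense_in_def L_def using dense_complement_of_nowhere_dense_Union[of X N, OF open_domain nowhere] by blast
  ultimately show ?thesis by blast
qed

end

section \<open>Estimates for the Lorenz field\<close>

lemma norm_prod3_le: "norm ((x::real), (y::real), (z::real)) \<le> \<bar>x\<bar> + \<bar>y\<bar> + \<bar>z\<bar>"
  using norm_Pair_le[of x "(y, z)"] norm_Pair_le[of y z] by simp

lemma abs_components_le_norm:
  fixes p :: R3
  shows "\<bar>fst p\<bar> \<le> norm p" "\<bar>fst (snd p)\<bar> \<le> norm p" "\<bar>snd (snd p)\<bar> \<le> norm p"
proof -
  have "norm (fst q) \<le> norm q" "norm (snd q) \<le> norm q"
    for q :: "'x::real_normed_vector \<times> 'y::real_normed_vector"
    using norm_fst_le[of "fst q" "snd q"] norm_snd_le[of "snd q" "fst q"] by auto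
  then show "\<bar>fst p\<bar> \<le> norm p" "\<bar>fst (snd p)\<bar> \<le> norm p" "\<bar>snd (snd p)\<bar> \<le> norm p"
    by (metis order_trans real_norm_def)+
qed

lemma lorenz_apply: "lorenz (\<sigma>, b, r) (x, y, z) = (- \<sigma> * x + \<sigma> * y, r * x - y - x * z, - b * z + x * y)"
  by (simp add: lorenz_def)

text \<open>Centring at \<open>(0, 0, \<sigma> + r)\<close> makes the terms in \<open>x y\<close> cancel in
  \<open>(p - c) \<bullet> lorenz lam p\<close>, so the squared distance from this centre is a Lyapunov function up
  to a constant.\<close>

definition lorenz_centre :: "R3 \<Rightarrow> R3" where
  "lorenz_centre lam = (0, 0, fst lam + snd (snd lam))"

definition lorenz_dissipation :: "R3 \<Rightarrow> real" where
  "lorenz_dissipation lam = min (min (2 * fst lam) 2) (fst (snd lam))"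

definition lorenz_forcing :: "R3 \<Rightarrow> real" where
  "lorenz_forcing lam = fst (snd lam) * (fst lam + snd (snd lam))\<^sup>2"

definition lorenz_lipschitz :: "R3 \<Rightarrow> real \<Rightarrow> real" where
  "lorenz_lipschitz lam R = 2 * fst lam + snd (snd lam) + 1 + fst (snd lam) + 4 * R"

lemma lorenz_dissipation_pos: "lam \<in> pos_params \<Longrightarrow> lorenz_dissipation lam > 0"
  by (cases lam) (auto simp: lorenz_dissipation_def pos_params_def)

lemma lorenz_forcing_nonneg: "lam \<in> pos_params \<Longrightarrow> lorenz_forcing lam \<ge> 0"
  by (cases lam) (auto simp: lorenz_forcing_def pos_params_def)

lemma lorenz_lipschitz_nonneg: "lam \<in> pos_params \<Longrightarrow> R \<ge> 0 \<Longrightarrow> lorenz_lipschitz lam R \<ge> 0"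
  by (cases lam) (auto simp: lorenz_lipschitz_def pos_params_def)

lemma lorenz_energy_inequality:
  assumes "lam \<in> pos_params"
  shows "2 * ((p - lorenz_centre lam) \<bullet> lorenz lam p)
           \<le> - lorenz_dissipation lam * (norm (p - lorenz_centre lam))\<^sup>2 + lorenz_forcing lam"
proof -
  obtain \<sigma> b r where lam: "lam = (\<sigma>, b, r)" by (cases lam)
  obtain x y z where p: "p = (x, y, z)" by (cases p)
  have pos: "\<sigma> > 0" "b > 0" "r > 0" using assms lam by (auto simp: pos_params_def)
  define c where "c = \<sigma> + r"
  define a where "a = min (min (2 * \<sigma>) 2) b"
  have a: "a \<le> 2 * \<sigma>" "a \<le> 2" "a \<le> b" using pos by (auto simp: a_def)
  have "2 * ((p - lorenz_centre lam) \<bullet> lorenz lam p)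
          = - 2 * \<sigma> * x\<^sup>2 - 2 * y\<^sup>2 - b * z\<^sup>2 - b * (z - c)\<^sup>2 + b * c\<^sup>2"
    by (simp add: p lam lorenz_centre_def lorenz_apply c_def power2_eq_square algebra_simps)
  also have "\<dots> \<le> - a * (x\<^sup>2 + y\<^sup>2 + (z - c)\<^sup>2) + b * c\<^sup>2"
  proof -
    have "- 2 * \<sigma> * x\<^sup>2 \<le> - a * x\<^sup>2" "- 2 * y\<^sup>2 \<le> - a * y\<^sup>2"
         "- b * (z - c)\<^sup>2 \<le> - a * (z - c)\<^sup>2" "- b * z\<^sup>2 \<le> 0"
      using a pos by (simp_all add: mult_right_mono)
    then show ?thesis by (simp add: algebra_simps)
  qed
  also have "x\<^sup>2 + y\<^sup>2 + (z - c)\<^sup>2 = (norm (p - lorenz_centre lam))\<^sup>2"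
    by (simp add: p lam lorenz_centre_def norm_Pair c_def)
  finally show ?thesis
    by (simp add: lorenz_dissipation_def lorenz_forcing_def lam a_def c_def)
qed

lemma lorenz_lipschitz_on_ball:
  assumes "lam \<in> pos_params" "norm p \<le> R" "norm q \<le> R"
  shows "norm (lorenz lam p - lorenz lam q) \<le> lorenz_lipschitz lam R * norm (p - q)"
proof -
  obtain \<sigma> b r where lam: "lam = (\<sigma>, b, r)" by (cases lam)
  obtain x1 y1 z1 where p: "p = (x1, y1, z1)" by (cases p)
  obtain x2 y2 z2 where q: "q = (x2, y2, z2)" by (cases q)
  have pos: "\<sigma> > 0" "b > 0" "r > 0" using assms lam by (auto simp: pos_params_def)
  define n where "n = norm (p - q)"
  have d: "\<bar>x1 - x2\<bar> \<le> n" "\<bar>y1 - y2\<bar> \<le> n" "\<bar>z1 - z2\<bar> \<le> n"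
    using abs_components_le_norm[of "p - q"] by (auto simp: n_def p q)
  have R: "\<bar>x1\<bar> \<le> R" "\<bar>y1\<bar> \<le> R" "\<bar>z1\<bar> \<le> R" "\<bar>x2\<bar> \<le> R" "\<bar>y2\<bar> \<le> R"
    using abs_components_le_norm[of p] abs_components_le_norm[of q] assms(2,3) by (auto simp: p q)
  have prod: "\<bar>u * v\<bar> \<le> R * n" if "\<bar>u\<bar> \<le> R" "\<bar>v\<bar> \<le> n" for u v
    using that by (simp add: abs_mult mult_mono')
  have c1: "\<bar>\<sigma> * (y1 - y2) - \<sigma> * (x1 - x2)\<bar> \<le> \<sigma> * n + \<sigma> * n"
  proof -
    have "\<bar>\<sigma> * (y1 - y2) - \<sigma> * (x1 - x2)\<bar> \<le> \<sigma> * \<bar>y1 - y2\<bar> + \<sigma> * \<bar>x1 - x2\<bar>"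
      using pos by (simp add: abs_mult abs_triangle_ineq4[THEN order_trans])
    also have "\<dots> \<le> \<sigma> * n + \<sigma> * n"
      using d pos by (intro add_mono mult_left_mono) auto
    finally show ?thesis .
  qed
  have c2: "\<bar>r * (x1 - x2) - (y1 - y2) - z1 * (x1 - x2) - x2 * (z1 - z2)\<bar> \<le> r * n + n + R * n + R * n"
  proof -
    have "\<bar>r * (x1 - x2) - (y1 - y2) - z1 * (x1 - x2) - x2 * (z1 - z2)\<bar>
            \<le> \<bar>r * (x1 - x2)\<bar> + \<bar>y1 - y2\<bar> + \<bar>z1 * (x1 - x2)\<bar> + \<bar>x2 * (z1 - z2)\<bar>"
      by linarith
    also have "\<dots> \<le> r * n + n + R * n + R * n"
      using d pos prod[OF R(3) d(1)] prod[OF R(4) d(3)] by (intro add_mono) (auto simp: abs_mult)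
    finally show ?thesis .
  qed
  have c3: "\<bar>- b * (z1 - z2) + y1 * (x1 - x2) + x2 * (y1 - y2)\<bar> \<le> b * n + R * n + R * n"
  proof -
    have "\<bar>- b * (z1 - z2) + y1 * (x1 - x2) + x2 * (y1 - y2)\<bar>
            \<le> \<bar>b * (z1 - z2)\<bar> + \<bar>y1 * (x1 - x2)\<bar> + \<bar>x2 * (y1 - y2)\<bar>"
      by linarith
    also have "\<dots> \<le> b * n + R * n + R * n"
      using d pos prod[OF R(2) d(1)] prod[OF R(4) d(2)] by (intro add_mono) (auto simp: abs_mult)
    finally show ?thesis .
  qed
  have eq: "lorenz lam p - lorenz lam q =
          (\<sigma> * (y1 - y2) - \<sigma> * (x1 - x2),
           r * (x1 - x2) - (y1 - y2) - z1 * (x1 - x2) - x2 * (z1 - z2),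
           - b * (z1 - z2) + y1 * (x1 - x2) + x2 * (y1 - y2))"
    by (simp add: lam p q lorenz_apply algebra_simps)
  have "norm (lorenz lam p - lorenz lam q)
      \<le> (\<sigma> * n + \<sigma> * n) + (r * n + n + R * n + R * n) + (b * n + R * n + R * n)"
    unfolding eq using norm_prod3_le[of "\<sigma> * (y1 - y2) - \<sigma> * (x1 - x2)"
        "r * (x1 - x2) - (y1 - y2) - z1 * (x1 - x2) - x2 * (z1 - z2)"
        "- b * (z1 - z2) + y1 * (x1 - x2) + x2 * (y1 - y2)"] c1 c2 c3
    by linarith
  also have "\<dots> = lorenz_lipschitz lam R * n"
    by (simp add: lorenz_lipschitz_def lam algebra_simps)
  finally show ?thesis by (simp add: n_def)
qed

lemma lorenz_parameter_lipschitz: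
  assumes "norm p \<le> R"
  shows "norm (lorenz lam p - lorenz mu p) \<le> 4 * R * dist lam mu"
proof -
  obtain \<sigma> b r where lam: "lam = (\<sigma>, b, r)" by (cases lam)
  obtain \<sigma>' b' r' where mu: "mu = (\<sigma>', b', r')" by (cases mu)
  obtain x y z where p: "p = (x, y, z)" by (cases p)
  define D where "D = dist lam mu"
  have d: "\<bar>\<sigma> - \<sigma>'\<bar> \<le> D" "\<bar>b - b'\<bar> \<le> D" "\<bar>r - r'\<bar> \<le> D"
    using abs_components_le_norm[of "lam - mu"] by (auto simp: D_def dist_norm lam mu)
  have R: "\<bar>x\<bar> \<le> R" "\<bar>y\<bar> \<le> R" "\<bar>z\<bar> \<le> R"
    using abs_components_le_norm[of p] assms by (auto simp: p)
  have prod: "\<bar>u * v\<bar> \<le> D * R" if "\<bar>u\<bar> \<le> D" "\<bar>v\<bar> \<le> R" for u v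
    using that by (simp add: abs_mult mult_mono')
  have "lorenz lam p - lorenz mu p = ((\<sigma> - \<sigma>') * y - (\<sigma> - \<sigma>') * x, (r - r') * x, - ((b - b') * z))"
    by (simp add: lam mu p lorenz_apply algebra_simps)
  then have "norm (lorenz lam p - lorenz mu p)
      \<le> \<bar>(\<sigma> - \<sigma>') * y - (\<sigma> - \<sigma>') * x\<bar> + \<bar>(r - r') * x\<bar> + \<bar>(b - b') * z\<bar>"
    using norm_prod3_le[of "(\<sigma> - \<sigma>') * y - (\<sigma> - \<sigma>') * x" "(r - r') * x" "- ((b - b') * z)"]
    by simp
  also have "\<dots> \<le> (D * R + D * R) + D * R + D * R"
    using prod[OF d(1) R(2)] prod[OF d(1) R(1)] prod[OF d(3) R(1)] prod[OF d(2) R(3)]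
    by (intro add_mono) linarith+
  finally show ?thesis by (simp add: D_def algebra_simps)
qed

section \<open>The Lorenz semigroup\<close>

lemma lorenz_solution_exists:
  assumes lam: "lam \<in> pos_params"
  shows "\<exists>u. lorenz_solution lam u \<and> u 0 = x0"
proof -
  define c where "c = lorenz_centre lam"
  define a where "a = lorenz_dissipation lam"
  define B where "B = lorenz_forcing lam"
  have a: "a > 0" and B: "B \<ge> 0"
    using lorenz_dissipation_pos[OF lam] lorenz_forcing_nonneg[OF lam] by (simp_all add: a_def B_def)
  define \<rho> where "\<rho> = dist c x0 + sqrt (B / a) + 1"
  have "sqrt (B / a) \<ge> 0" using a B by simp
  then have \<rho>: "\<rho> > 0" "x0 \<in> cball c \<rho>" and "sqrt (B / a) \<le> \<rho>"
    using zero_le_dist[of c x0] unfolding \<rho>_def mem_cball by linarith+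
  then have "(sqrt (B / a))\<^sup>2 \<le> \<rho>\<^sup>2"
    using \<open>sqrt (B / a) \<ge> 0\<close> by (intro power_mono)
  then have "B / a \<le> \<rho>\<^sup>2"
    using a B by simp
  then have forcing: "B \<le> a * \<rho>\<^sup>2"
    using a by (simp add: field_simps)
  have norm_le: "norm p \<le> norm c + \<rho>" if "p \<in> cball c \<rho>" for p
    using norm_triangle_sub[of p c] that by (simp add: dist_norm norm_minus_commute)
  obtain u where "u 0 = x0" "\<And>s. s \<ge> 0 \<Longrightarrow> (u has_vector_derivative lorenz lam (u s)) (at s within {0..})"
  proof (rule trapping_ball_solution[of c \<rho> "lorenz lam" "lorenz_lipschitz lam (norm c + \<rho>)"])
    show "norm (lorenz lam p - lorenz lam q) \<le> lorenz_lipschitz lam (norm c + \<rho>) * norm (p - q)"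
      if "p \<in> cball c \<rho>" "q \<in> cball c \<rho>" for p q
      using lorenz_lipschitz_on_ball[OF lam norm_le norm_le] that by blast
    show "(p - c) \<bullet> lorenz lam p \<le> 0" if "dist c p = \<rho>" for p
      using lorenz_energy_inequality[OF lam, of p] that forcing
      by (simp add: c_def a_def B_def dist_norm norm_minus_commute)
    show "lorenz_lipschitz lam (norm c + \<rho>) \<ge> 0"
      using \<rho> by (intro lorenz_lipschitz_nonneg[OF lam]) auto
  qed (use \<rho> in auto)
  then show ?thesis
    unfolding lorenz_solution_def by blast
qed

lemma lorenz_solution_energy_bound:
  assumes lam: "lam \<in> pos_params" and u: "lorenz_solution lam u" and t: "t \<ge> 0"
  shows "(norm (u t - lorenz_centre lam))\<^sup>2 \<le> exp (- lorenz_dissipation lam * t) *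
           ((norm (u 0 - lorenz_centre lam))\<^sup>2 - lorenz_forcing lam / lorenz_dissipation lam)
           + lorenz_forcing lam / lorenz_dissipation lam"
proof (rule DERIV_affine_bound_imp_exponential_bound)
  fix s :: real assume "s \<ge> 0"
  then show "((\<lambda>s. (norm (u s - lorenz_centre lam))\<^sup>2) has_real_derivative
               2 * ((u s - lorenz_centre lam) \<bullet> lorenz lam (u s))) (at s within {0..})"
    using u unfolding lorenz_solution_def by (intro has_real_derivative_norm_diff_power2) auto
  show "2 * ((u s - lorenz_centre lam) \<bullet> lorenz lam (u s))
          \<le> - lorenz_dissipation lam * (norm (u s - lorenz_centre lam))\<^sup>2 + lorenz_forcing lam"
    by (rule lorenz_energy_inequality[OF lam])
qed (use lorenz_dissipation_pos[OF lam] t in auto)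

definition lorenz_bound_radius :: "R3 \<Rightarrow> real \<Rightarrow> real" where
  "lorenz_bound_radius lam R0 = norm (lorenz_centre lam)
     + sqrt ((R0 + norm (lorenz_centre lam))\<^sup>2 + lorenz_forcing lam / lorenz_dissipation lam)"

lemma lorenz_solution_bounded:
  assumes lam: "lam \<in> pos_params" and u: "lorenz_solution lam u" and u0: "norm (u 0) \<le> R0"
    and t: "t \<ge> 0"
  shows "norm (u t) \<le> lorenz_bound_radius lam R0"
proof -
  define c where "c = lorenz_centre lam"
  define Q where "Q = lorenz_forcing lam / lorenz_dissipation lam"
  define e where "e = exp (- lorenz_dissipation lam * t)"
  have Q: "Q \<ge> 0"
    using lorenz_forcing_nonneg[OF lam] lorenz_dissipation_pos[OF lam] by (simp add: Q_def)
  have e: "0 < e" "e \<le> 1"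
    using t lorenz_dissipation_pos[OF lam] by (auto simp: e_def)
  have "norm (u 0 - c) \<le> R0 + norm c"
    using norm_triangle_ineq4[of "u 0" c] u0 by simp
  then have V0: "(norm (u 0 - c))\<^sup>2 \<le> (R0 + norm c)\<^sup>2"
    by (intro power_mono) auto
  have "(norm (u t - c))\<^sup>2 \<le> e * ((norm (u 0 - c))\<^sup>2 - Q) + Q"
    using lorenz_solution_energy_bound[OF lam u t] by (simp add: c_def Q_def e_def)
  also have "\<dots> = e * (norm (u 0 - c))\<^sup>2 + (1 - e) * Q"
    by (simp add: algebra_simps)
  also have "\<dots> \<le> (R0 + norm c)\<^sup>2 + Q"
    using e Q V0 mult_left_le_one_le[of "(norm (u 0 - c))\<^sup>2" e] mult_left_le_one_le[of Q "1 - e"]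
    by simp
  finally have "norm (u t - c) \<le> sqrt ((R0 + norm c)\<^sup>2 + Q)"
    using real_le_rsqrt by blast
  then show ?thesis
    using norm_triangle_sub[of "u t" c] by (simp add: lorenz_bound_radius_def c_def Q_def)
qed

lemma lorenz_solutions_distance_bound:
  assumes lam: "lam \<in> pos_params" and u: "lorenz_solution lam u" and v: "lorenz_solution mu v"
    and bounded: "\<And>s. s \<in> {0..T} \<Longrightarrow> norm (u s) \<le> R \<and> norm (v s) \<le> R"
    and t: "t \<in> {0..T}" and "R \<ge> 0"
  shows "(norm (u t - v t))\<^sup>2 \<le> exp ((2 * lorenz_lipschitz lam R + 1) * t) *
           ((norm (u 0 - v 0))\<^sup>2 + (4 * R * dist lam mu)\<^sup>2 * t)"
proof (rule gronwall_distance_bound)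
  fix s assume s: "s \<in> {0..T}"
  show "(u has_vector_derivative lorenz lam (u s)) (at s within {0..})"
       "(v has_vector_derivative lorenz mu (v s)) (at s within {0..})"
    using u v s by (auto simp: lorenz_solution_def)
  have "norm (lorenz lam (u s) - lorenz lam (v s)) \<le> lorenz_lipschitz lam R * norm (u s - v s)"
    using bounded[OF s] by (intro lorenz_lipschitz_on_ball[OF lam]) auto
  moreover have "norm (lorenz lam (v s) - lorenz mu (v s)) \<le> 4 * R * dist lam mu"
    using bounded[OF s] by (intro lorenz_parameter_lipschitz) auto
  ultimately show "norm (lorenz lam (u s) - lorenz mu (v s))
                     \<le> lorenz_lipschitz lam R * norm (u s - v s) + 4 * R * dist lam mu"
    using norm_triangle_ineq[of "lorenz lam (u s) - lorenz lam (v s)" "lorenz lam (v s) - lorenz mu (v s)"]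
    by simp
qed (use t lorenz_lipschitz_nonneg[OF lam \<open>R \<ge> 0\<close>] in auto)

definition lorenz_trajectory :: "R3 \<Rightarrow> R3 \<Rightarrow> real \<Rightarrow> R3" where
  "lorenz_trajectory lam x = (SOME u. lorenz_solution lam u \<and> u 0 = x)"

lemma lorenz_trajectory_solution:
  assumes "lam \<in> pos_params"
  shows "lorenz_solution lam (lorenz_trajectory lam x)" "lorenz_trajectory lam x 0 = x"
  using someI_ex[OF lorenz_solution_exists[OF assms, of x]] by (auto simp: lorenz_trajectory_def)

lemma lorenz_solution_unique:
  assumes lam: "lam \<in> pos_params" and u: "lorenz_solution lam u" and v: "lorenz_solution lam v"
    and "u 0 = v 0" "t \<ge> 0"
  shows "u t = v t"
proof -
  define R where "R = lorenz_bound_radius lam (norm (u 0))"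
  have bounded: "norm (u s) \<le> R \<and> norm (v s) \<le> R" if "s \<in> {0..t}" for s
    using lorenz_solution_bounded[OF lam u, of "norm (u 0)" s]
      lorenz_solution_bounded[OF lam v, of "norm (u 0)" s] that \<open>u 0 = v 0\<close>
    by (auto simp: R_def)
  then have "R \<ge> 0"
    using bounded[of 0] \<open>t \<ge> 0\<close> by (auto intro: order_trans[OF norm_ge_zero])
  then have "(norm (u t - v t))\<^sup>2 \<le> exp ((2 * lorenz_lipschitz lam R + 1) * t) *
               ((norm (u 0 - v 0))\<^sup>2 + (4 * R * dist lam lam)\<^sup>2 * t)"
    using \<open>t \<ge> 0\<close> by (intro lorenz_solutions_distance_bound[OF lam u v bounded]) auto
  then show ?thesis using \<open>u 0 = v 0\<close> by simp
qed

lemma lorenz_semigroup_solution: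
  assumes lam: "lam \<in> pos_params" and u: "lorenz_solution lam u" and t: "t \<ge> 0"
  shows "lorenz_semigroup lam t (u 0) = u t"
  unfolding lorenz_semigroup_def
proof (rule the_equality)
  show "\<exists>v. lorenz_solution lam v \<and> v 0 = u 0 \<and> v t = u t" using u by blast
  fix y assume "\<exists>v. lorenz_solution lam v \<and> v 0 = u 0 \<and> v t = y"
  then obtain v where "lorenz_solution lam v" "v 0 = u 0" "v t = y" by blast
  then show "y = u t" using lorenz_solution_unique[OF lam u, of v t] t by simp
qed

lemma lorenz_solution_shift:
  assumes u: "lorenz_solution lam u" and s: "s \<ge> 0"
  shows "lorenz_solution lam (\<lambda>\<tau>. u (\<tau> + s))"
  unfolding lorenz_solution_def
proof (intro allI impI)
  fix \<tau> :: real assume \<tau>: "\<tau> \<ge> 0"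
  have shift: "((\<lambda>\<tau>. \<tau> + s) has_vector_derivative 1) (at \<tau> within {0..})"
    by (auto intro!: derivative_eq_intros simp flip: has_real_derivative_iff_has_vector_derivative)
  have "(u has_vector_derivative lorenz lam (u (\<tau> + s))) (at (\<tau> + s) within {0..})"
    using u \<tau> s unfolding lorenz_solution_def by auto
  then have "(u has_vector_derivative lorenz lam (u (\<tau> + s))) (at (\<tau> + s) within (\<lambda>\<tau>. \<tau> + s) ` {0..})"
    by (rule has_vector_derivative_within_subset) (use s in auto)
  from vector_diff_chain_within[OF shift this]
  show "((\<lambda>\<tau>. u (\<tau> + s)) has_vector_derivative lorenz lam (u (\<tau> + s))) (at \<tau> within {0..})"
    by (simp add: o_def)
qed

lemma lorenz_semigroup_add:
  assumes lam: "lam \<in> pos_params" and "s \<ge> 0" "t \<ge> 0"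
  shows "lorenz_semigroup lam t (lorenz_semigroup lam s x) = lorenz_semigroup lam (t + s) x"
proof -
  define u where "u = lorenz_trajectory lam x"
  have u: "lorenz_solution lam u" "u 0 = x"
    using lorenz_trajectory_solution[OF lam] by (auto simp: u_def)
  have "lorenz_semigroup lam s x = u s"
    using lorenz_semigroup_solution[OF lam u(1) \<open>s \<ge> 0\<close>] u(2) by simp
  then have "lorenz_semigroup lam t (lorenz_semigroup lam s x) = u (t + s)"
    using lorenz_semigroup_solution[OF lam lorenz_solution_shift[OF u(1) \<open>s \<ge> 0\<close>] \<open>t \<ge> 0\<close>] by simp
  also have "\<dots> = lorenz_semigroup lam (t + s) x"
    using lorenz_semigroup_solution[OF lam u(1), of "t + s"] u(2) assms by simp
  finally show ?thesis .
qed

lemma lorenz_semigroup_lipschitz_on_ball: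
  assumes lam: "lam \<in> pos_params" and "norm x \<le> R0" "norm y \<le> R0" and t: "t \<ge> 0"
  shows "dist (lorenz_semigroup lam t x) (lorenz_semigroup lam t y)
           \<le> exp ((2 * lorenz_lipschitz lam (lorenz_bound_radius lam R0) + 1) * t) * dist x y"
proof -
  define u where "u = lorenz_trajectory lam x"
  define v where "v = lorenz_trajectory lam y"
  have u: "lorenz_solution lam u" "u 0 = x" and v: "lorenz_solution lam v" "v 0 = y"
    using lorenz_trajectory_solution[OF lam] by (auto simp: u_def v_def)
  define R where "R = lorenz_bound_radius lam R0"
  define E where "E = exp ((2 * lorenz_lipschitz lam R + 1) * t)"
  have bounded: "norm (u s) \<le> R \<and> norm (v s) \<le> R" if "s \<in> {0..t}" for s
    using lorenz_solution_bounded[OF lam u(1), of R0 s] lorenz_solution_bounded[OF lam v(1), of R0 s]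
      that u(2) v(2) assms by (auto simp: R_def)
  then have "R \<ge> 0"
    using bounded[of 0] t by (auto intro: order_trans[OF norm_ge_zero])
  have "(norm (u t - v t))\<^sup>2 \<le> E * (norm (x - y))\<^sup>2"
    using lorenz_solutions_distance_bound[OF lam u(1) v(1) bounded _ \<open>R \<ge> 0\<close>, of t] t u v
    by (simp add: E_def)
  also have "\<dots> \<le> (E * norm (x - y))\<^sup>2"
  proof -
    have "1 \<le> E"
      using t lorenz_lipschitz_nonneg[OF lam \<open>R \<ge> 0\<close>] by (simp add: E_def)
    then have "E \<le> E\<^sup>2"
      by (simp add: power2_eq_square)
    then show ?thesis
      by (simp add: power_mult_distrib mult_right_mono)
  qed
  finally have "norm (u t - v t) \<le> E * norm (x - y)"
    by (rule power2_le_imp_le) (simp add: E_def)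
  then show ?thesis
    using lorenz_semigroup_solution[OF lam u(1) t] lorenz_semigroup_solution[OF lam v(1) t] u(2) v(2)
    by (simp add: dist_norm E_def R_def)
qed

lemma continuous_lorenz_semigroup:
  assumes lam: "lam \<in> pos_params" and t: "t \<ge> 0"
  shows "isCont (lorenz_semigroup lam t) y"
proof -
  define R0 where "R0 = norm y + 1"
  define K where "K = exp ((2 * lorenz_lipschitz lam (lorenz_bound_radius lam R0) + 1) * t)"
  have "K-lipschitz_on (cball 0 R0) (lorenz_semigroup lam t)"
    by (rule lipschitz_onI) (use lorenz_semigroup_lipschitz_on_ball[OF lam _ _ t, of _ R0] in \<open>auto simp: K_def\<close>)
  then have "continuous_on (cball 0 R0) (lorenz_semigroup lam t)"
    by (rule lipschitz_on_continuous_on)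
  moreover have "y \<in> interior (cball 0 R0)"
    by (simp add: R0_def)
  ultimately show ?thesis
    by (rule continuous_on_interior)
qed

definition lorenz_absorbing_ball :: "R3 \<Rightarrow> R3 set" where
  "lorenz_absorbing_ball lam =
     cball (lorenz_centre lam) (sqrt (lorenz_forcing lam / lorenz_dissipation lam + 1))"

lemma lorenz_absorbing_ball_absorbs:
  assumes lam: "lam \<in> pos_params"
  shows "\<exists>T. \<forall>t\<ge>T. \<forall>x. norm x \<le> R0 \<longrightarrow> lorenz_semigroup lam t x \<in> lorenz_absorbing_ball lam"
proof -
  define a where "a = lorenz_dissipation lam"
  define Q where "Q = lorenz_forcing lam / lorenz_dissipation lam"
  define c where "c = lorenz_centre lam"
  define P where "P = (max R0 0 + norm c)\<^sup>2"
  have a: "a > 0" and Q: "Q \<ge> 0" and P: "P \<ge> 0"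
    using lorenz_dissipation_pos[OF lam] lorenz_forcing_nonneg[OF lam] by (simp_all add: a_def Q_def P_def)
  define T where "T = ln (P + 1) / a"
  have "lorenz_semigroup lam t x \<in> lorenz_absorbing_ball lam" if "t \<ge> T" "norm x \<le> R0" for t x
  proof -
    have "T \<ge> 0"
      using a P by (simp add: T_def)
    then have t: "t \<ge> 0"
      using that by linarith
    define u where "u = lorenz_trajectory lam x"
    have u: "lorenz_solution lam u" "u 0 = x"
      using lorenz_trajectory_solution[OF lam] by (auto simp: u_def)
    have "norm (x - c) \<le> max R0 0 + norm c"
      using norm_triangle_ineq4[of x c] that by simp
    then have x: "(norm (x - c))\<^sup>2 \<le> P"
      unfolding P_def by (intro power_mono) auto
    have "exp (- a * t) * P \<le> exp (- a * T) * P"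
      using that a P by (intro mult_right_mono) auto
    also have "exp (- a * T) = 1 / (P + 1)"
      using a P by (simp add: T_def exp_minus exp_ln inverse_eq_divide)
    also have "1 / (P + 1) * P \<le> 1"
      using P by (simp add: field_simps)
    finally have decay: "exp (- a * t) * P \<le> 1" .
    have "(norm (u t - c))\<^sup>2 \<le> exp (- a * t) * ((norm (x - c))\<^sup>2 - Q) + Q"
      using lorenz_solution_energy_bound[OF lam u(1) t] u(2) by (simp add: a_def Q_def c_def)
    also have "\<dots> \<le> exp (- a * t) * P + Q"
      using x Q by (intro add_right_mono mult_left_mono) auto
    finally have "(norm (u t - c))\<^sup>2 \<le> Q + 1"
      using decay by simp
    then have "dist c (u t) \<le> sqrt (Q + 1)"
      by (simp add: dist_norm norm_minus_commute real_le_rsqrt)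
    then show ?thesis
      using lorenz_semigroup_solution[OF lam u(1) t] u(2)
      by (simp add: lorenz_absorbing_ball_def c_def Q_def)
  qed
  then show ?thesis by blast
qed

section \<open>Upper semicontinuity of the Lorenz attractor\<close>

lemma lorenz_dissipative_semiflow:
  assumes lam: "lam \<in> pos_params"
  shows "dissipative_semiflow (lorenz_semigroup lam) (lorenz_absorbing_ball lam)"
proof
  show "compact (lorenz_absorbing_ball lam)"
    by (simp add: lorenz_absorbing_ball_def)
  show "lorenz_absorbing_ball lam \<noteq> {}"
    using divide_nonneg_pos[OF lorenz_forcing_nonneg[OF lam] lorenz_dissipation_pos[OF lam]]
    by (simp add: lorenz_absorbing_ball_def)
  show "lorenz_semigroup lam t (lorenz_semigroup lam s x) = lorenz_semigroup lam (t + s) x"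
    if "0 \<le> s" "0 \<le> t" for s t x
    using lorenz_semigroup_add[OF lam that] .
  show "isCont (lorenz_semigroup lam t) x" if "0 \<le> t" for t x
    using continuous_lorenz_semigroup[OF lam that] .
  show "\<exists>T. \<forall>t\<ge>T. \<forall>x\<in>B. lorenz_semigroup lam t x \<in> lorenz_absorbing_ball lam" if "bounded B" for B
  proof -
    obtain R0 where "\<And>x. x \<in> B \<Longrightarrow> norm x \<le> R0"
      using \<open>bounded B\<close> unfolding bounded_iff by blast
    then show ?thesis
      using lorenz_absorbing_ball_absorbs[OF lam, of R0] by blast
  qed
qed

lemma lorenz_attractor_eq:
  assumes "lam \<in> pos_params"
  shows "lorenz_attractor lam =
           dissipative_semiflow.attractor (lorenz_semigroup lam) (lorenz_absorbing_ball lam)"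
proof -
  note global = dissipative_semiflow_global_attractor[OF lorenz_dissipative_semiflow[OF assms]]
  show ?thesis
    unfolding lorenz_attractor_def
    by (rule the_equality[where P="is_global_attractor (lorenz_semigroup lam)", OF global]) (rule global_attractor_unique[OF _ global])
qed

lemma lorenz_global_attractor:
  "lam \<in> pos_params \<Longrightarrow> is_global_attractor (lorenz_semigroup lam) (lorenz_attractor lam)"
  using dissipative_semiflow_global_attractor[OF lorenz_dissipative_semiflow] lorenz_attractor_eq
  by simp

lemma lorenz_attractor_subset_absorbing_ball:
  "lam \<in> pos_params \<Longrightarrow> lorenz_attractor lam \<subseteq> lorenz_absorbing_ball lam"
  using dissipative_semiflow.attractor_subset[OF lorenz_dissipative_semiflow] lorenz_attractor_eq
  by simp

lemma lorenz_parameters_locally_bounded: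
  assumes "lam \<in> pos_params"
  obtains d C Q where "d > 0" "C \<ge> 0" "Q \<ge> 0"
    "\<And>mu. mu \<in> pos_params \<Longrightarrow> dist mu lam < d \<Longrightarrow>
       norm (lorenz_centre mu) \<le> C \<and> lorenz_forcing mu / lorenz_dissipation mu \<le> Q"
proof -
  obtain \<sigma> b r where lam: "lam = (\<sigma>, b, r)" by (cases lam)
  have pos: "\<sigma> > 0" "b > 0" "r > 0" using assms lam by (auto simp: pos_params_def)
  define d where "d = min (min \<sigma> b) r / 2"
  define C where "C = 2 * \<sigma> + 2 * r"
  define \<alpha> where "\<alpha> = min (min \<sigma> 2) (b / 2)"
  define Q where "Q = 2 * b * C\<^sup>2 / \<alpha>"
  have \<alpha>: "\<alpha> > 0" using pos by (simp add: \<alpha>_def)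
  have "d > 0" "C \<ge> 0" "Q \<ge> 0"
    using pos \<alpha> by (auto simp: d_def C_def Q_def)
  moreover have "norm (lorenz_centre mu) \<le> C \<and> lorenz_forcing mu / lorenz_dissipation mu \<le> Q"
    if mu: "mu \<in> pos_params" "dist mu lam < d" for mu
  proof -
    obtain \<sigma>' b' r' where mu_eq: "mu = (\<sigma>', b', r')" by (cases mu)
    have pos': "\<sigma>' > 0" "b' > 0" "r' > 0" using mu mu_eq by (auto simp: pos_params_def)
    have "\<bar>\<sigma>' - \<sigma>\<bar> < d" "\<bar>b' - b\<bar> < d" "\<bar>r' - r\<bar> < d"
      using abs_components_le_norm[of "mu - lam"] mu(2) by (auto simp: dist_norm lam mu_eq)
    moreover have "d \<le> \<sigma> / 2" "d \<le> b / 2" "d \<le> r / 2" using pos by (auto simp: d_def)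
    ultimately have bounds: "\<sigma>' \<le> 2 * \<sigma>" "r' \<le> 2 * r" "b' \<le> 2 * b" "\<sigma>' \<ge> \<sigma> / 2" "b' \<ge> b / 2"
      by linarith+
    have "(\<sigma>' + r')\<^sup>2 \<le> C\<^sup>2"
      using bounds pos' by (intro power_mono) (auto simp: C_def)
    then have forcing: "lorenz_forcing mu \<le> 2 * b * C\<^sup>2"
      using bounds pos' by (simp add: lorenz_forcing_def mu_eq mult_mono)
    have "\<alpha> \<le> lorenz_dissipation mu"
      using bounds pos by (simp add: lorenz_dissipation_def mu_eq \<alpha>_def min.bounded_iff min_le_iff_disj)
    then have "lorenz_forcing mu / lorenz_dissipation mu \<le> lorenz_forcing mu / \<alpha>"
      using lorenz_forcing_nonneg[OF mu(1)] \<alpha> by (intro divide_left_mono) auto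
    also have "\<dots> \<le> Q"
      unfolding Q_def using forcing \<alpha> by (simp add: divide_right_mono)
    finally show ?thesis
      using bounds pos' by (simp add: lorenz_centre_def mu_eq norm_Pair C_def)
  qed
  ultimately show ?thesis by (rule that)
qed

lemma lorenz_uniform_bounds:
  assumes "lam \<in> pos_params"
  obtains d R2 R1 where "d > 0" "R2 \<ge> 0"
    "\<And>mu. mu \<in> pos_params \<Longrightarrow> dist mu lam < d \<Longrightarrow>
       lorenz_absorbing_ball mu \<subseteq> cball 0 R1 \<and> lorenz_bound_radius mu R1 \<le> R2"
proof -
  obtain d C Q where "d > 0" "C \<ge> 0" "Q \<ge> 0"
    and near: "\<And>mu. mu \<in> pos_params \<Longrightarrow> dist mu lam < d \<Longrightarrow>
       norm (lorenz_centre mu) \<le> C \<and> lorenz_forcing mu / lorenz_dissipation mu \<le> Q"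
    using lorenz_parameters_locally_bounded[OF assms] by metis
  define R1 where "R1 = C + sqrt (Q + 1)"
  define R2 where "R2 = C + sqrt ((R1 + C)\<^sup>2 + Q)"
  show ?thesis
  proof
    show "d > 0" "R2 \<ge> 0" using \<open>d > 0\<close> \<open>C \<ge> 0\<close> \<open>Q \<ge> 0\<close> by (auto simp: R2_def)
    fix mu assume mu: "mu \<in> pos_params" "dist mu lam < d"
    have "lorenz_absorbing_ball mu \<subseteq> cball 0 R1"
    proof
      fix x assume "x \<in> lorenz_absorbing_ball mu"
      then have "norm x \<le> norm (lorenz_centre mu) + sqrt (lorenz_forcing mu / lorenz_dissipation mu + 1)"
        using norm_triangle_sub[of x "lorenz_centre mu"]
        by (simp add: lorenz_absorbing_ball_def dist_norm norm_minus_commute)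
      also have "\<dots> \<le> R1"
        using near[OF mu] unfolding R1_def by (intro add_mono real_sqrt_le_mono) auto
      finally show "x \<in> cball 0 R1" by simp
    qed
    moreover have "lorenz_bound_radius mu R1 \<le> R2"
    proof -
      have "R1 \<ge> 0" using \<open>C \<ge> 0\<close> \<open>Q \<ge> 0\<close> by (simp add: R1_def)
      then have "(R1 + norm (lorenz_centre mu))\<^sup>2 \<le> (R1 + C)\<^sup>2"
        using near[OF mu] by (intro power_mono) auto
      then show ?thesis
        using near[OF mu] unfolding lorenz_bound_radius_def R2_def
        by (intro add_mono real_sqrt_le_mono) auto
    qed
    ultimately show "lorenz_absorbing_ball mu \<subseteq> cball 0 R1 \<and> lorenz_bound_radius mu R1 \<le> R2"
      by blast
  qed
qed

lemma lorenz_semigroup_parameter_bound: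
  assumes lam: "lam \<in> pos_params" and mu: "mu \<in> pos_params" and x: "norm x \<le> R1"
    and R2: "lorenz_bound_radius lam R1 \<le> R2" "lorenz_bound_radius mu R1 \<le> R2" and "t \<ge> 0"
  shows "(dist (lorenz_semigroup mu t x) (lorenz_semigroup lam t x))\<^sup>2
           \<le> exp ((2 * lorenz_lipschitz lam R2 + 1) * t) * (4 * R2)\<^sup>2 * t * (dist mu lam)\<^sup>2"
proof -
  define u where "u = lorenz_trajectory lam x"
  define v where "v = lorenz_trajectory mu x"
  have u: "lorenz_solution lam u" "u 0 = x" and v: "lorenz_solution mu v" "v 0 = x"
    using lorenz_trajectory_solution[OF lam] lorenz_trajectory_solution[OF mu] by (auto simp: u_def v_def)
  have bounded: "norm (u s) \<le> R2 \<and> norm (v s) \<le> R2" if "s \<in> {0..t}" for s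
    using lorenz_solution_bounded[OF lam u(1), of R1 s] lorenz_solution_bounded[OF mu v(1), of R1 s]
      u(2) v(2) x R2 that by auto
  then have "R2 \<ge> 0"
    using \<open>t \<ge> 0\<close> bounded[of 0] by (auto intro: order_trans[OF norm_ge_zero])
  have "(norm (u t - v t))\<^sup>2 \<le> exp ((2 * lorenz_lipschitz lam R2 + 1) * t) *
          ((norm (u 0 - v 0))\<^sup>2 + (4 * R2 * dist lam mu)\<^sup>2 * t)"
    using \<open>t \<ge> 0\<close> by (intro lorenz_solutions_distance_bound[OF lam u(1) v(1) bounded _ \<open>R2 \<ge> 0\<close>]) auto
  then show ?thesis
    using lorenz_semigroup_solution[OF lam u(1) \<open>t \<ge> 0\<close>] lorenz_semigroup_solution[OF mu v(1) \<open>t \<ge> 0\<close>]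
      u(2) v(2)
    by (simp add: dist_norm norm_minus_commute dist_commute power_mult_distrib algebra_simps)
qed

lemma lorenz_semigroup_close_in_parameter:
  assumes lam: "lam \<in> pos_params" and R2_lam: "lorenz_bound_radius lam R1 \<le> R2"
    and "T \<ge> 0" "e > 0"
  shows "\<exists>d>0. \<forall>mu\<in>pos_params. dist mu lam < d \<longrightarrow> lorenz_bound_radius mu R1 \<le> R2 \<longrightarrow>
           (\<forall>x. norm x \<le> R1 \<longrightarrow> dist (lorenz_semigroup mu T x) (lorenz_semigroup lam T x) \<le> e)"
proof -
  define M where "M = exp ((2 * lorenz_lipschitz lam R2 + 1) * T) * (4 * R2)\<^sup>2 * T + 1"
  have M: "M > 0" using \<open>T \<ge> 0\<close> by (simp add: M_def add_nonneg_pos)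
  define d where "d = e / sqrt M"
  have "d > 0" using \<open>e > 0\<close> M by (simp add: d_def)
  moreover have "dist (lorenz_semigroup mu T x) (lorenz_semigroup lam T x) \<le> e"
    if mu: "mu \<in> pos_params" "dist mu lam < d" and R2_mu: "lorenz_bound_radius mu R1 \<le> R2"
      and x: "norm x \<le> R1" for mu x
  proof -
    have "(dist (lorenz_semigroup mu T x) (lorenz_semigroup lam T x))\<^sup>2
            \<le> exp ((2 * lorenz_lipschitz lam R2 + 1) * T) * (4 * R2)\<^sup>2 * T * (dist mu lam)\<^sup>2"
      by (rule lorenz_semigroup_parameter_bound[OF lam mu(1) x R2_lam R2_mu \<open>T \<ge> 0\<close>])
    also have "\<dots> \<le> M * (dist mu lam)\<^sup>2"
      by (intro mult_right_mono) (auto simp: M_def)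
    also have "\<dots> \<le> M * d\<^sup>2"
      using mu(2) M by (intro mult_left_mono power_mono) auto
    also have "\<dots> = e\<^sup>2"
      using M by (simp add: d_def power_divide)
    finally show ?thesis
      by (rule power2_le_imp_le) (use \<open>e > 0\<close> in simp)
  qed
  ultimately show ?thesis by blast
qed

text \<open>A point of the attractor for \<open>mu\<close> is the image under the flow for \<open>mu\<close> at time \<open>T\<close> of a
  point \<open>x\<close> of that attractor; \<open>x\<close> lies in a ball that the flow for \<open>lam\<close> carries close to
  the attractor for \<open>lam\<close> by time \<open>T\<close>, and at the fixed time \<open>T\<close> the two flows differ by
  \<open>O(dist mu lam)\<close>.\<close>

lemma lorenz_attractor_upper_semicontinuous:
  assumes lam: "lam \<in> pos_params" and "e > 0"
  shows "\<exists>d>0. \<forall>mu\<in>pos_params. dist mu lam < d \<longrightarrow>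
           (\<forall>a\<in>lorenz_attractor mu. infdist a (lorenz_attractor lam) < e)"
proof -
  obtain d1 R1 R2 where d1: "d1 > 0" "R2 \<ge> 0"
    and bounds: "\<And>mu. mu \<in> pos_params \<Longrightarrow> dist mu lam < d1 \<Longrightarrow>
       lorenz_absorbing_ball mu \<subseteq> cball 0 R1 \<and> lorenz_bound_radius mu R1 \<le> R2"
    using lorenz_uniform_bounds[OF lam] by metis
  have "e / 2 > 0" using \<open>e > 0\<close> by simp
  moreover have "\<forall>B. bounded B \<longrightarrow> (\<forall>e>0. \<exists>T. \<forall>t\<ge>T. \<forall>x\<in>B.
                   infdist (lorenz_semigroup lam t x) (lorenz_attractor lam) < e)"
    using lorenz_global_attractor[OF lam] by (simp add: is_global_attractor_def)
  ultimately obtain T0 where T0: "\<forall>t\<ge>T0. \<forall>x\<in>cball 0 R1. infdist (lorenz_semigroup lam t x) (lorenz_attractor lam) < e / 2"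
    using bounded_cball by blast
  define T where "T = max T0 0"
  have "T \<ge> 0" by (simp add: T_def)
  have "lorenz_bound_radius lam R1 \<le> R2"
    using bounds[OF lam] d1 by simp
  then obtain d2 where d2: "d2 > 0"
    "\<forall>mu\<in>pos_params. dist mu lam < d2 \<longrightarrow> lorenz_bound_radius mu R1 \<le> R2 \<longrightarrow>
       (\<forall>x. norm x \<le> R1 \<longrightarrow> dist (lorenz_semigroup mu T x) (lorenz_semigroup lam T x) \<le> e / 2)"
    using lorenz_semigroup_close_in_parameter[OF lam _ \<open>T \<ge> 0\<close> \<open>e / 2 > 0\<close>] by blast
  have "infdist a (lorenz_attractor lam) < e"
    if mu: "mu \<in> pos_params" "dist mu lam < min d1 d2" and a: "a \<in> lorenz_attractor mu" for mu a
  proof -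
    obtain x where x: "x \<in> lorenz_attractor mu" "a = lorenz_semigroup mu T x"
      using a lorenz_global_attractor[OF mu(1)] \<open>T \<ge> 0\<close> unfolding is_global_attractor_def by blast
    have "x \<in> cball 0 R1" "lorenz_bound_radius mu R1 \<le> R2"
      using x(1) lorenz_attractor_subset_absorbing_ball[OF mu(1)] bounds[OF mu(1)] mu(2) by auto
    then have "dist a (lorenz_semigroup lam T x) \<le> e / 2"
      unfolding x(2) using mu by (intro d2(2)[rule_format]) auto
    moreover have "infdist (lorenz_semigroup lam T x) (lorenz_attractor lam) < e / 2"
      using T0 \<open>x \<in> cball 0 R1\<close> by (simp add: T_def)
    ultimately show ?thesis
      using infdist_triangle[of a "lorenz_attractor lam" "lorenz_semigroup lam T x"] by linarith
  qed
  then show ?thesis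
    using d1(1) d2(1) by (intro exI[of _ "min d1 d2"]) auto
qed

lemma open_pos_params: "open pos_params"
proof -
  have "pos_params = {p. 0 < fst p} \<inter> {p. 0 < fst (snd p)} \<inter> {p. 0 < snd (snd p)}"
    by (auto simp: pos_params_def)
  moreover have "open ({p :: R3. 0 < fst p} \<inter> {p. 0 < fst (snd p)} \<inter> {p. 0 < snd (snd p)})"
    by (intro open_Int open_Collect_less continuous_intros)
  ultimately show ?thesis by simp
qed

theorem theorem6p2:
  shows "\<exists>L. residual_in L pos_params \<and> dense_in L pos_params \<and>
     (\<forall>lam\<in>L. \<forall>e>0. \<exists>d>0. \<forall>mu\<in>pos_params. dist mu lam < d \<longrightarrow>
        hausdorff_dist (lorenz_attractor mu) (lorenz_attractor lam) < e)"
proof -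
  interpret upper_semicontinuous_family pos_params lorenz_attractor
  proof
    show "open pos_params" by (rule open_pos_params)
    fix lam assume lam: "lam \<in> pos_params"
    show "compact (lorenz_attractor lam)" "lorenz_attractor lam \<noteq> {}"
      using lorenz_global_attractor[OF lam] by (simp_all add: is_global_attractor_def)
    show "\<exists>d>0. \<forall>mu\<in>pos_params. dist mu lam < d \<longrightarrow> (\<forall>a\<in>lorenz_attractor mu. infdist a (lorenz_attractor lam) < e)"
      if "e > 0" for e
      using lorenz_attractor_upper_semicontinuous[OF lam that] .
  qed
  show ?thesis by (rule continuous_on_residual)
qed

end
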